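(* For all $s\in\mathcal{Q}$, the function $F_s$ is supported on a subset of $J_s$, and $F_s(c)=1$ for every extremal point $c$ of $J_s$.
   Context: $\mathcal{Q}=\mathbb{Q}^{\geq0}\cup\{\infty\}$; each $\sigma\in\mathcal{Q}$ is written uniquely $\sigma=q/p$ with $p,q\in\mathbb{N}$ coprime ($\infty=1/0$). For such $\sigma$: $J_\sigma=\{(\alpha,\beta)\in\mathbb{Z}^2:\ \alpha\equiv q,\ \beta\equiv p\pmod2;\ \alpha\geq-q;\ \beta\geq-p;\ \alpha+\beta\leq p+q-2;\ p\alpha+q\beta\geq0\}$, $P^\sigma_i=(q+2i,-p)$, $Q^\sigma_j=(-q,p+2j)$. The extremal points of $J_\sigma$ are $P^\sigma_0,P^\sigma_{p-1},Q^\sigma_0,Q^\sigma_{q-1}$ if $\sigma\notin\{0,\infty\}$, and the unique point of $J_\sigma$ if $\sigma\in\{0,\infty\}$. Parents: for $\sigma\in\mathcal{Q}\smallsetminus\{0,1,\infty\}$, let $L_\sigma$ be the hyperbolic geodesic in the upper half-plane from $\sigma$ to $\sqrt{-1}$; the parents of $\sigma$ are the endpoints of the first edge of the Farey triangulation (ideal triangles with vertices $\frac{q_0}{p_0},\frac{q_0+q_1}{p_0+p_1},\frac{q_1}{p_1}$, $q_0p_1-q_1p_0=\pm1$) crossed by $L_\sigma$, closest to $\sigma$; the parents of $1$ are $0$ and $\infty$. For $\sigma\notin\{0,1,\infty\}$ the parents are labelled $\sigma_0,\sigma_1$ so that the parents of $\sigma_1$ are $\sigma_0$ and another point $\sigma'\in\mathcal{Q}$.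 Let $\mathcal{F}$ be the set of finitely supported functions $\mathbb{Z}^2\to\mathbb{Z}$, with convolution $F*G(u)=\sum_{x+y=u}F(x)G(y)$; $1\!\!1_U$ is the indicator function of $U$; $\Lambda=\{(0,0),(0,2),(2,0)\}$. Define $F_\sigma=1\!\!1_{J_\sigma}$ for $\sigma\in\{0,1,\infty\}$, and recursively $F_\sigma=F_{\sigma_0}*F_{\sigma_1}*1\!\!1_\Lambda-F_{\sigma'}$ for $\sigma\in\mathcal{Q}\smallsetminus\{0,1,\infty\}$. *)

theory Defs
  imports Complex_Main "HOL-Library.Product_Plus"
begin

text \<open>An element sigma = q/p of Q is represented by the pair (q,p) of coprime
  naturals; infinity = 1/0 is (1,0), 0 = 0/1 is (0,1), 1 is (1,1).\<close>

definition inQ :: "nat \<times> nat \<Rightarrow> bool" where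
  "inQ s \<longleftrightarrow> coprime (fst s) (snd s)"

definition Jset :: "nat \<times> nat \<Rightarrow> (int \<times> int) set" where
  "Jset s = (let q = int (fst s); p = int (snd s) in
     {(\<alpha>, \<beta>). \<alpha> mod 2 = q mod 2 \<and> \<beta> mod 2 = p mod 2 \<and> \<alpha> \<ge> -q \<and> \<beta> \<ge> -p
        \<and> \<alpha> + \<beta> \<le> p + q - 2 \<and> p * \<alpha> + q * \<beta> \<ge> 0})"

definition Ppt :: "nat \<times> nat \<Rightarrow> int \<Rightarrow> int \<times> int" where
  "Ppt s i = (int (fst s) + 2 * i, - int (snd s))"

definition Qpt :: "nat \<times> nat \<Rightarrow> int \<Rightarrow> int \<times> int" where
  "Qpt s j = (- int (fst s), int (snd s) + 2 * j)"

definition extremal :: "nat \<times> nat \<Rightarrow> (int \<times> int) set" where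
  "extremal s = (if s = (0,1) \<or> s = (1,0) then Jset s
     else {Ppt s 0, Ppt s (int (snd s) - 1), Qpt s 0, Qpt s (int (fst s) - 1)})"

text \<open>A vertex of the Farey triangulation is an integer pair (a,b) standing for the
  point a/b of the real line (infinity if b = 0).  The edges are the sides of the
  ideal triangles with vertices q0/p0, (q0+q1)/(p0+p1), q1/p1, q0 p1 - q1 p0 = +-1.\<close>

definition fdet :: "int \<times> int \<Rightarrow> int \<times> int \<Rightarrow> int" where
  "fdet v w = fst v * snd w - fst w * snd v"

definition farey_edge :: "int \<times> int \<Rightarrow> int \<times> int \<Rightarrow> bool" where
  "farey_edge v w \<longleftrightarrow> (\<exists>v0 v1. (fdet v0 v1 = 1 \<or> fdet v0 v1 = -1) \<and>
      ((v, w) = (v0, v1) \<or> (v, w) = (v0, v0 + v1) \<or> (v, w) = (v1, v0 + v1)))"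

definition geod_edge :: "int \<times> int \<Rightarrow> int \<times> int \<Rightarrow> complex set" where
  "geod_edge v w = {z. Im z > 0 \<and>
     (if snd v = 0 then Re z = of_int (fst w) / of_int (snd w)
      else if snd w = 0 then Re z = of_int (fst v) / of_int (snd v)
      else cmod (z - complex_of_real ((of_int (fst v) / of_int (snd v)
                         + of_int (fst w) / of_int (snd w)) / 2))
           = \<bar>of_int (fst v) / of_int (snd v) - of_int (fst w) / of_int (snd w)\<bar> / 2)}"

definition sval :: "nat \<times> nat \<Rightarrow> real" where
  "sval s = real (fst s) / real (snd s)"

text \<open>For a finite sigma > 0, the geodesic L_sigma from sigma to i: the arc of
  the circle centred on the real axis through sigma and i (orthogonal to the real
  axis), namely the part of its upper half with nonnegative real part.\<close>

definition Lgeod :: "nat \<times> nat \<Rightarrow> complex set" where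
  "Lgeod s = (let x0 = ((sval s)\<^sup>2 - 1) / (2 * sval s) in
     {z. Im z > 0 \<and> Re z \<ge> 0 \<and> cmod (z - complex_of_real x0) = cmod (\<i> - complex_of_real x0)})"

definition crosses :: "nat \<times> nat \<Rightarrow> int \<times> int \<Rightarrow> int \<times> int \<Rightarrow> complex \<Rightarrow> bool" where
  "crosses s v w z \<longleftrightarrow> farey_edge v w \<and> z \<in> geod_edge v w \<inter> Lgeod s"

definition first_edge :: "nat \<times> nat \<Rightarrow> int \<times> int \<Rightarrow> int \<times> int \<Rightarrow> bool" where
  "first_edge s v w \<longleftrightarrow> (\<exists>z. crosses s v w z \<and>
     (\<forall>v' w' z'. crosses s v' w' z' \<longrightarrow>
        cmod (z - complex_of_real (sval s)) \<le> cmod (z' - complex_of_real (sval s))))"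

definition same_pt :: "nat \<times> nat \<Rightarrow> int \<times> int \<Rightarrow> bool" where
  "same_pt s v \<longleftrightarrow> int (fst s) * snd v = int (snd s) * fst v"

definition parents :: "nat \<times> nat \<Rightarrow> (nat \<times> nat) set" where
  "parents s = (if s = (1,1) then {(0,1), (1,0)}
     else if s = (0,1) \<or> s = (1,0) then {}
     else {t. inQ t \<and> (\<exists>v w. first_edge s v w \<and> (same_pt t v \<or> same_pt t w))})"

definition labels :: "nat \<times> nat \<Rightarrow> (nat \<times> nat) \<times> (nat \<times> nat) \<times> (nat \<times> nat)" where
  "labels s = (SOME (s0, s1, s'). s0 \<noteq> s1 \<and> parents s = {s0, s1} \<and>
                  inQ s' \<and> s' \<noteq> s0 \<and> parents s1 = {s0, s'})"

definition conv :: "(int \<times> int \<Rightarrow> int) \<Rightarrow> (int \<times> int \<Rightarrow> int) \<Rightarrow> int \<times> int \<Rightarrow> int" where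
  "conv F G u = (\<Sum>x\<in>{x. F x \<noteq> 0}. F x * G (u - x))"

definition ind :: "(int \<times> int) set \<Rightarrow> int \<times> int \<Rightarrow> int" where
  "ind U x = (if x \<in> U then 1 else 0)"

definition Lam :: "(int \<times> int) set" where
  "Lam = {(0,0), (0,2), (2,0)}"

definition qsize :: "nat \<times> nat \<Rightarrow> nat" where
  "qsize s = fst s + snd s"

text \<open>The recursion; the guard (parents strictly smaller in q+p) always holds
  for sigma in Q (it only makes the definition total/terminating).\<close>

function Ffun :: "nat \<times> nat \<Rightarrow> int \<times> int \<Rightarrow> int" where
  "Ffun s = (if s = (0,1) \<or> s = (1,1) \<or> s = (1,0) then ind (Jset s)
     else (let s0 = fst (labels s); s1 = fst (snd (labels s)); s' = snd (snd (labels s)) in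
       if qsize s0 < qsize s \<and> qsize s1 < qsize s \<and> qsize s' < qsize s
       then (\<lambda>u. conv (conv (Ffun s0) (Ffun s1)) (ind Lam) u - Ffun s' u)
       else (\<lambda>_. 0)))"
  by auto
termination
  by (relation "measure qsize") (auto simp: Let_def)

end

theory Submission
  imports Defs
begin

text \<open>
  Write \<open>\<sigma> = (a + c)/(b + d)\<close> as the mediant of Farey neighbours \<open>a/b\<close>, \<open>c/d\<close> with
  \<open>a + b < c + d\<close>. On the circle carrying \<open>L\<^sub>\<sigma>\<close>, the equation of the geodesic joining two Farey
  vertices is affine in \<open>Re z\<close>. Expanding the vertices in the basis \<open>(a, b), (c, d)\<close>, its values at
  the crossing with the edge \<open>a/b \<dash> c/d\<close> and at \<open>\<sigma>\<close> are \<open>\<alpha>\<beta> A + \<gamma>\<delta> C\<close> (with \<open>A, C > 0\<close>) and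
  \<open>(\<gamma> - \<alpha>)(\<delta> - \<beta>)/(b + d)\<^sup>2\<close>, and unimodularity of \<open>(\<alpha> \<gamma>; \<beta> \<delta>)\<close> forces these to have a common
  strict sign unless the vertices are \<open>\<plusminus>(a, b), \<plusminus>(c, d)\<close>. So no other Farey edge meets \<open>L\<^sub>\<sigma>\<close>
  closer to \<open>\<sigma>\<close>; hence \<open>\<sigma>\<^sub>0 = a/b\<close>, \<open>\<sigma>\<^sub>1 = c/d\<close>, \<open>\<sigma>' = (c - a)/(d - b)\<close>, and the theorem follows
  by induction on \<open>p + q\<close>.

  In the induction step, all inequalities defining \<open>J\<^sub>\<sigma>\<close> except the last are additive over
  \<open>J\<^sub>\<sigma>\<^sub>0 + \<Lambda> + J\<^sub>\<sigma>\<^sub>1\<close> and hold on \<open>J\<^sub>\<sigma>'\<close>. The last one says \<open>W \<ge> 0\<close> for the linear form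
  \<open>W(\<alpha>, \<beta>) = (b + d)\<alpha> + (a + c)\<beta>\<close>, which is odd and \<open>\<ge> -1\<close> on \<open>J\<^sub>\<sigma>\<^sub>0\<close> and \<open>J\<^sub>\<sigma>\<^sub>1\<close>, even and \<open>\<ge> -2\<close>
  on \<open>J\<^sub>\<sigma>'\<close>, and \<open>0\<close> or \<open>\<ge> 2\<close> on \<open>\<Lambda>\<close>, each minimum being attained at a single extremal point.
  Hence where \<open>W < 0\<close> both \<open>F\<^sub>\<sigma>\<^sub>0 * F\<^sub>\<sigma>\<^sub>1 * 1\<^sub>\<Lambda>\<close> and \<open>F\<^sub>\<sigma>'\<close> live on one point, where both equal 1.
  At an extremal point of \<open>J\<^sub>\<sigma>\<close> the convolution has a single term, a product of values at
  extremal points, while \<open>F\<^sub>\<sigma>'\<close> vanishes there.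
\<close>

declare Ffun.simps [simp del]

section \<open>Unimodular integer matrices\<close>

lemma unimodular_products_nonneg:
  fixes \<alpha> \<beta> \<gamma> \<delta> :: int
  assumes "\<bar>\<alpha>*\<delta> - \<beta>*\<gamma>\<bar> = 1"
  shows "0 \<le> (\<alpha>*\<beta>) * (\<gamma>*\<delta>)"
proof (rule ccontr)
  define X Y where "X = \<alpha>*\<delta>" and "Y = \<beta>*\<gamma>"
  assume "\<not> ?thesis"
  then have "X * Y < 0" by (simp add: X_def Y_def algebra_simps)
  then have "\<bar>X - Y\<bar> \<ge> 2" by (auto simp: mult_less_0_iff)
  with assms show False by (simp add: X_def Y_def)
qed

lemma unimodular_sign:
  fixes \<alpha> \<beta> \<gamma> \<delta> :: int
  assumes det: "\<bar>\<alpha>*\<delta> - \<beta>*\<gamma>\<bar> = 1"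
    and nonneg: "0 \<le> \<alpha>*\<beta>" "0 \<le> \<gamma>*\<delta>" and nonzero: "\<alpha>*\<beta> + \<gamma>*\<delta> \<noteq> 0"
  shows "0 \<le> (\<gamma> - \<alpha>) * (\<delta> - \<beta>)"
proof -
  define s where "s = \<alpha>*\<beta> + \<gamma>*\<delta>"
  define t where "t = \<alpha>*\<delta> + \<beta>*\<gamma>"
  have s1: "1 \<le> s" using nonneg nonzero by (simp add: s_def)
  have "t\<^sup>2 = (\<alpha>*\<delta> - \<beta>*\<gamma>)\<^sup>2 + 4 * ((\<alpha>*\<beta>) * (\<gamma>*\<delta>))"
    by (simp add: t_def power2_eq_square algebra_simps)
  also have "\<dots> \<le> 1 + s\<^sup>2"
  proof -
    define u v where "u = \<alpha>*\<beta>" and "v = \<gamma>*\<delta>"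
    have "(\<alpha>*\<delta> - \<beta>*\<gamma>)\<^sup>2 = 1" using det by (simp add: abs_square_eq_1)
    moreover have "4 * (u * v) \<le> (u + v)\<^sup>2"
      using zero_le_power2[of "u - v"] by (simp add: power2_eq_square algebra_simps)
    ultimately show ?thesis by (simp add: s_def u_def v_def)
  qed
  finally have ts: "t\<^sup>2 \<le> 1 + s\<^sup>2" .
  have "t \<le> s"
  proof (rule ccontr)
    assume "\<not> t \<le> s"
    then have "(s + 1)\<^sup>2 \<le> t\<^sup>2" using s1 by (intro power_mono) auto
    then show False using ts s1 by (simp add: power2_eq_square algebra_simps)
  qed
  moreover have "(\<gamma> - \<alpha>) * (\<delta> - \<beta>) = s - t" by (simp add: s_def t_def algebra_simps)
  ultimately show ?thesis by simp
qed

lemma unimodular_products_zero: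
  fixes \<alpha> \<beta> \<gamma> \<delta> :: int
  assumes det: "\<bar>\<alpha>*\<delta> - \<beta>*\<gamma>\<bar> = 1" and "\<alpha>*\<beta> = 0" "\<gamma>*\<delta> = 0"
  shows "(\<alpha> = 0 \<and> \<delta> = 0 \<and> \<bar>\<beta>\<bar> = 1 \<and> \<bar>\<gamma>\<bar> = 1) \<or> (\<beta> = 0 \<and> \<gamma> = 0 \<and> \<bar>\<alpha>\<bar> = 1 \<and> \<bar>\<delta>\<bar> = 1)"
proof (cases "\<alpha> = 0")
  case True
  then have "\<bar>\<beta>*\<gamma>\<bar> = 1" using det by simp
  then have "\<bar>\<beta>\<bar> = 1" "\<bar>\<gamma>\<bar> = 1"
    using abs_zmult_eq_1[of \<beta> \<gamma>] abs_zmult_eq_1[of \<gamma> \<beta>] by (simp_all add: mult.commute)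
  moreover from this have "\<delta> = 0" using assms(3) by auto
  ultimately show ?thesis using True by simp
next
  case False
  then have "\<beta> = 0" using assms(2) by simp
  then have "\<bar>\<alpha>*\<delta>\<bar> = 1" using det by simp
  then have "\<bar>\<alpha>\<bar> = 1" "\<bar>\<delta>\<bar> = 1"
    using abs_zmult_eq_1[of \<alpha> \<delta>] abs_zmult_eq_1[of \<delta> \<alpha>] by (simp_all add: mult.commute)
  moreover from this have "\<gamma> = 0" using assms(3) by auto
  ultimately show ?thesis using \<open>\<beta> = 0\<close> by simp
qed

lemma unimodular_mixture_pos:
  fixes \<alpha> \<beta> \<gamma> \<delta> :: int and p r t l :: real
  assumes det: "\<bar>\<alpha>*\<delta> - \<beta>*\<gamma>\<bar> = 1" and pos: "0 < p" "0 < r" "0 < t" "0 < l" "l \<le> 1"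
    and nonneg: "0 \<le> \<alpha>*\<beta>" "0 \<le> \<gamma>*\<delta>" and nonzero: "\<alpha>*\<beta> + \<gamma>*\<delta> \<noteq> 0"
  shows "0 < l * (of_int (\<alpha>*\<beta>) * p + of_int (\<gamma>*\<delta>) * r) + (1 - l) * (of_int ((\<gamma> - \<alpha>) * (\<delta> - \<beta>)) * t)"
proof -
  define u v where "u = real_of_int (\<alpha>*\<beta>)" and "v = real_of_int (\<gamma>*\<delta>)"
  have "0 \<le> u" "0 \<le> v" "0 < u \<or> 0 < v"
    unfolding u_def v_def of_int_0_le_iff of_int_0_less_iff using nonneg nonzero by linarith+
  then have "0 < u * p + v * r" using pos by (smt (verit) mult_nonneg_nonneg mult_pos_pos)
  moreover have "(0::real) \<le> of_int ((\<gamma> - \<alpha>) * (\<delta> - \<beta>))"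
    by (simp only: of_int_0_le_iff) (rule unimodular_sign[OF det nonneg nonzero])
  then have "0 \<le> of_int ((\<gamma> - \<alpha>) * (\<delta> - \<beta>)) * t" using pos(3) by simp
  ultimately show ?thesis using pos unfolding u_def v_def by (simp add: add_pos_nonneg)
qed

lemma unimodular_mixture_root:
  fixes \<alpha> \<beta> \<gamma> \<delta> :: int and p r t l :: real
  assumes det: "\<bar>\<alpha>*\<delta> - \<beta>*\<gamma>\<bar> = 1" and pos: "0 < p" "0 < r" "0 < t" "0 < l" "l \<le> 1"
    and root: "l * (of_int (\<alpha>*\<beta>) * p + of_int (\<gamma>*\<delta>) * r) + (1 - l) * (of_int ((\<gamma> - \<alpha>) * (\<delta> - \<beta>)) * t) = 0"
  shows "l = 1 \<and> \<alpha>*\<beta> = 0 \<and> \<gamma>*\<delta> = 0"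
proof -
  have zero: "\<alpha>*\<beta> = 0 \<and> \<gamma>*\<delta> = 0"
  proof (rule ccontr)
    assume nz: "\<not> ?thesis"
    consider "0 \<le> \<alpha>*\<beta>" "0 \<le> \<gamma>*\<delta>" | "\<alpha>*\<beta> \<le> 0" "\<gamma>*\<delta> \<le> 0"
      using unimodular_products_nonneg[OF det] by (auto simp: zero_le_mult_iff)
    then show False
    proof cases
      case 1
      then have "\<alpha>*\<beta> + \<gamma>*\<delta> \<noteq> 0" using nz by linarith
      then show False using unimodular_mixture_pos[OF det pos 1] root by linarith
    next
      case 2
      have det': "\<bar>\<alpha>*(-\<delta>) - (-\<beta>)*\<gamma>\<bar> = 1" using det by (simp add: abs_minus_commute)
      have "0 \<le> \<alpha>*(-\<beta>)" "0 \<le> \<gamma>*(-\<delta>)" "\<alpha>*(-\<beta>) + \<gamma>*(-\<delta>) \<noteq> 0"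
        using 2 nz by (simp_all only: mult_minus_right) arith+
      from unimodular_mixture_pos[OF det' pos this]
      show False using root by (simp add: algebra_simps)
    qed
  qed
  then have "(\<gamma> - \<alpha>) * (\<delta> - \<beta>) \<noteq> 0" using unimodular_products_zero[OF det] by auto
  then have "l = 1" using root zero pos(3) by simp
  with zero show ?thesis by simp
qed

section \<open>Geodesics of the upper half plane\<close>

definition L_norm_sq :: "real \<Rightarrow> real \<Rightarrow> real \<Rightarrow> real" where
  "L_norm_sq q p x = 1 + (q\<^sup>2 - p\<^sup>2) * x / (p * q)"

lemma Lgeod_iff:
  assumes "0 < fst s" "0 < snd s"
  shows "z \<in> Lgeod s \<longleftrightarrow>
    0 < Im z \<and> 0 \<le> Re z \<and> (Re z)\<^sup>2 + (Im z)\<^sup>2 = L_norm_sq (fst s) (snd s) (Re z)"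
proof -
  define q p where "q = real (fst s)" and "p = real (snd s)"
  have "0 < q" "0 < p" using assms by (simp_all add: q_def p_def)
  define x0 where "x0 = ((q/p)\<^sup>2 - 1) / (2 * (q/p))"
  have x0: "2 * x0 = (q\<^sup>2 - p\<^sup>2) / (p * q)"
    using \<open>0 < q\<close> \<open>0 < p\<close> by (simp add: x0_def field_simps power2_eq_square)
  have "cmod (z - complex_of_real x0) = cmod (\<i> - complex_of_real x0) \<longleftrightarrow>
        (cmod (z - complex_of_real x0))\<^sup>2 = (cmod (\<i> - complex_of_real x0))\<^sup>2"
    by (simp add: power2_eq_iff_nonneg)
  also have "\<dots> \<longleftrightarrow> (Re z)\<^sup>2 + (Im z)\<^sup>2 = 1 + (2 * x0) * Re z"
    by (simp only: cmod_power2) (simp add: power2_eq_square algebra_simps)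
  also have "\<dots> \<longleftrightarrow> (Re z)\<^sup>2 + (Im z)\<^sup>2 = L_norm_sq q p (Re z)"
    unfolding L_norm_sq_def x0 by simp
  finally show ?thesis
    unfolding Lgeod_def Let_def sval_def by (simp add: x0_def q_def p_def)
qed

text \<open>For \<open>Im z > 0\<close>, the geodesic joining the ideal points \<open>u = v\<^sub>1/v\<^sub>2\<close> and
  \<open>t = w\<^sub>1/w\<^sub>2\<close> is \<open>|z|\<^sup>2 - (u + t) Re z + u t = 0\<close>; multiplied by \<open>v\<^sub>2 w\<^sub>2\<close> this equation
  also covers an endpoint at \<open>\<infinity>\<close>.\<close>

definition edge_eq :: "int \<times> int \<Rightarrow> int \<times> int \<Rightarrow> real \<Rightarrow> real \<Rightarrow> real" where
  "edge_eq v w x r = of_int (snd v * snd w) * r - of_int (fst v * snd w + snd v * fst w) * x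
     + of_int (fst v * fst w)"

lemma circle_diameter_iff:
  "cmod (z - of_real ((u + t) / 2)) = \<bar>u - t\<bar> / 2 \<longleftrightarrow> (Re z)\<^sup>2 + (Im z)\<^sup>2 - (u + t) * Re z + u * t = 0"
proof -
  have "cmod (z - of_real ((u + t) / 2)) = \<bar>u - t\<bar> / 2 \<longleftrightarrow>
        (cmod (z - of_real ((u + t) / 2)))\<^sup>2 = (\<bar>u - t\<bar> / 2)\<^sup>2"
    by (simp add: power2_eq_iff_nonneg)
  also have "\<dots> \<longleftrightarrow> (Re z - (u + t) / 2)\<^sup>2 + (Im z)\<^sup>2 = ((u - t) / 2)\<^sup>2"
    by (simp add: cmod_power2 power_divide)
  also have "(Re z - (u + t) / 2)\<^sup>2 + (Im z)\<^sup>2 - ((u - t) / 2)\<^sup>2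
      = (Re z)\<^sup>2 + (Im z)\<^sup>2 - (u + t) * Re z + u * t"
    by (simp add: power2_eq_square field_simps)
  then have "(Re z - (u + t) / 2)\<^sup>2 + (Im z)\<^sup>2 = ((u - t) / 2)\<^sup>2 \<longleftrightarrow>
      (Re z)\<^sup>2 + (Im z)\<^sup>2 - (u + t) * Re z + u * t = 0" by linarith
  finally show ?thesis .
qed

lemma geod_edge_iff:
  assumes "\<bar>fdet v w\<bar> = 1"
  shows "z \<in> geod_edge v w \<longleftrightarrow> 0 < Im z \<and> edge_eq v w (Re z) ((Re z)\<^sup>2 + (Im z)\<^sup>2) = 0"
proof -
  obtain a b where v: "v = (a, b)" by fastforce
  obtain c d where w: "w = (c, d)" by fastforce
  have det: "\<bar>a * d - c * b\<bar> = 1" using assms by (simp add: fdet_def v w)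
  define x where "x = Re z"
  consider "b = 0" | "b \<noteq> 0" "d = 0" | "b \<noteq> 0" "d \<noteq> 0" by blast
  then show ?thesis
  proof cases
    case 1
    then have "a \<noteq> 0" "d \<noteq> 0" using det by auto
    have e: "edge_eq v w x r = 0 \<longleftrightarrow> x = of_int c / of_int d" for r
    proof -
      have h: "edge_eq v w x r = - of_int a * (of_int d * x - of_int c)"
        by (simp add: edge_eq_def v w 1 algebra_simps)
      show ?thesis unfolding h using \<open>a \<noteq> 0\<close> \<open>d \<noteq> 0\<close> by (auto simp: field_simps)
    qed
    show ?thesis using 1 e by (auto simp: geod_edge_def v w x_def)
  next
    case 2
    then have "c \<noteq> 0" using det by auto
    have e: "edge_eq v w x r = 0 \<longleftrightarrow> x = of_int a / of_int b" for r
    proof -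
      have h: "edge_eq v w x r = - of_int c * (of_int b * x - of_int a)"
        by (simp add: edge_eq_def v w 2 algebra_simps)
      show ?thesis unfolding h using \<open>c \<noteq> 0\<close> 2 by (auto simp: field_simps)
    qed
    show ?thesis using 2 e by (auto simp: geod_edge_def v w x_def)
  next
    case 3
    define u t where "u = real_of_int a / of_int b" and "t = real_of_int c / of_int d"
    have "of_int b * of_int d * ((Re z)\<^sup>2 + (Im z)\<^sup>2 - (u + t) * Re z + u * t)
        = edge_eq v w (Re z) ((Re z)\<^sup>2 + (Im z)\<^sup>2)"
      using 3 unfolding edge_eq_def v w u_def t_def by (simp add: field_simps)
    then show ?thesis
      using 3 circle_diameter_iff[of z u t] unfolding geod_edge_def v w u_def t_def by auto
  qed
qed

lemma edge_eq_combination: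
  fixes \<alpha> \<beta> \<gamma> \<delta> :: int
  shows "edge_eq (\<alpha>*a + \<gamma>*c, \<alpha>*b + \<gamma>*d) (\<beta>*a + \<delta>*c, \<beta>*b + \<delta>*d) x r =
    of_int (\<alpha>*\<beta>) * edge_eq (a, b) (a, b) x r + of_int (\<alpha>*\<delta> + \<beta>*\<gamma>) * edge_eq (a, b) (c, d) x r
    + of_int (\<gamma>*\<delta>) * edge_eq (c, d) (c, d) x r"
  by (simp add: edge_eq_def algebra_simps)

lemma edge_eq_self_pos:
  assumes "x\<^sup>2 < r" "v \<noteq> 0"
  shows "0 < edge_eq v v x r"
proof -
  have "edge_eq v v x r = of_int (snd v) ^ 2 * (r - x\<^sup>2) + (of_int (snd v) * x - of_int (fst v))\<^sup>2"
    by (simp add: edge_eq_def power2_eq_square algebra_simps)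
  moreover have "snd v = 0 \<Longrightarrow> fst v \<noteq> 0" using assms(2) by (simp add: prod_eq_iff)
  ultimately show ?thesis using assms(1)
    by (cases "snd v = 0") (simp_all add: add_pos_nonneg)
qed

lemma farey_edge_unimodular: "farey_edge v w \<Longrightarrow> \<bar>fdet v w\<bar> = 1"
  unfolding farey_edge_def by (auto simp: fdet_def algebra_simps)

section \<open>Farey pairs and the parents of their mediant\<close>

lemma same_pt_unique:
  assumes "inQ t" "coprime a b" "0 \<le> a" "0 \<le> b" "u = (a, b) \<or> u = (-a, -b)" "same_pt t u"
  shows "t = (nat a, nat b)"
proof -
  have "int (fst t) * b = int (snd t) * a" using assms(5,6) by (auto simp: same_pt_def)
  then have "\<bar>int (fst t)\<bar> * \<bar>b\<bar> = \<bar>a\<bar> * \<bar>int (snd t)\<bar>" by (metis abs_mult mult.commute)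
  moreover have "coprime (int (fst t)) (int (snd t))" using assms(1) by (simp add: inQ_def)
  ultimately have "\<bar>int (fst t)\<bar> = \<bar>a\<bar> \<and> \<bar>b\<bar> = \<bar>int (snd t)\<bar>"
    using coprime_crossproduct_int assms(2) by blast
  then show ?thesis using assms(3,4) by (auto simp: prod_eq_iff)
qed

locale farey_pair =
  fixes a b c d :: int
  assumes nonneg: "0 \<le> a" "0 \<le> b" "0 \<le> c" "0 \<le> d"
    and unimodular: "\<bar>a*d - b*c\<bar> = 1"
begin

definition "\<epsilon> = a*d - b*c"
definition "Q = real_of_int (a + c)"
definition "P = real_of_int (b + d)"
definition "sigma = (nat (a + c), nat (b + d))"
definition "sigma0 = (nat a, nat b)"
definition "sigma1 = (nat c, nat d)"

lemma eps_cases: "\<epsilon> = 1 \<or> \<epsilon> = -1"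
  using unimodular by (auto simp: \<epsilon>_def abs_if split: if_splits)

lemma eps_sq: "\<epsilon> * \<epsilon> = 1"
  using eps_cases by auto

lemma sums_pos: "0 < a + b" "0 < c + d" "0 < a + c" "0 < b + d"
  using nonneg unimodular by (auto simp: le_less)

lemma zero_coord_cases:
  "b = 0 \<Longrightarrow> a = 1 \<and> d = 1" "a = 0 \<Longrightarrow> b = 1 \<and> c = 1"
  using unimodular nonneg abs_zmult_eq_1[of a d] abs_zmult_eq_1[of d a]
    abs_zmult_eq_1[of b c] abs_zmult_eq_1[of c b] by (auto simp: mult.commute)

lemma QP_pos: "0 < Q" "0 < P"
  using sums_pos by (simp_all add: Q_def P_def)

lemma sigma_pos: "0 < fst sigma" "0 < snd sigma"
  using sums_pos by (simp_all add: sigma_def)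

lemma sval_sigma: "sval sigma = Q / P"
  using nonneg by (simp add: sval_def sigma_def Q_def P_def)

lemma Lgeod_sigma:
  "z \<in> Lgeod sigma \<longleftrightarrow> 0 < Im z \<and> 0 \<le> Re z \<and> (Re z)\<^sup>2 + (Im z)\<^sup>2 = L_norm_sq Q P (Re z)"
  using Lgeod_iff[OF sigma_pos] nonneg by (simp add: sigma_def Q_def P_def)

definition "on_L v w x = edge_eq v w x (L_norm_sq Q P x)"

text \<open>The abscissa of the point where \<open>L\<^sub>\<sigma>\<close> crosses the geodesic from \<open>a/b\<close> to \<open>c/d\<close>.\<close>

definition "xc = P * Q * of_int (a*c + b*d) / (P\<^sup>2 * of_int (a*c + b*d) + 1)"

lemma L_norm_sq_minus_sq: "L_norm_sq Q P x - x\<^sup>2 = (Q/P - x) * (x + P/Q)"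
  using QP_pos by (simp add: L_norm_sq_def field_simps power2_eq_square)

lemma L_norm_sq_gt_sq:
  assumes "0 \<le> x" "x < Q/P"
  shows "x\<^sup>2 < L_norm_sq Q P x"
proof -
  have "0 < x + P/Q" using assms QP_pos by (simp add: add_nonneg_pos)
  then have "0 < (Q/P - x) * (x + P/Q)" using assms by simp
  then show ?thesis using L_norm_sq_minus_sq[of x] by simp
qed

lemma xc_nonneg: "0 \<le> xc"
  using QP_pos nonneg by (simp add: xc_def)

lemma xc_less: "xc < Q/P"
proof -
  define k where "k = real_of_int (a*c + b*d)"
  have "0 \<le> P\<^sup>2 * k" using nonneg by (simp add: k_def)
  then have "xc = Q/P * (P\<^sup>2 * k / (P\<^sup>2 * k + 1))"
    using QP_pos unfolding xc_def k_def[symmetric] by (simp add: field_simps power2_eq_square)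
  moreover have "P\<^sup>2 * k / (P\<^sup>2 * k + 1) < 1" using \<open>0 \<le> P\<^sup>2 * k\<close> by simp
  ultimately show ?thesis
    using QP_pos by (metis divide_pos_pos mult.right_neutral mult_strict_left_mono)
qed

lemma on_L_parents_iff: "on_L (a, b) (c, d) x = 0 \<longleftrightarrow> x = xc"
proof -
  define K where "K = real_of_int (a*c + b*d)"
  have "0 \<le> K" using nonneg by (simp add: K_def)
  have key: "of_int (b*d) * (Q\<^sup>2 - P\<^sup>2) - P * Q * of_int (a*d + b*c) = - (P\<^sup>2 * K + 1)"
  proof -
    have "(b*d)*((a+c)\<^sup>2 - (b+d)\<^sup>2) - (b+d)*(a+c)*(a*d+b*c) = -((b+d)\<^sup>2*(a*c+b*d) + \<epsilon>*\<epsilon>)"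
      by (simp add: \<epsilon>_def power2_eq_square algebra_simps)
    from arg_cong[OF this, of real_of_int] show ?thesis
      unfolding eps_sq Q_def P_def K_def by (simp add: algebra_simps)
  qed
  have "P * Q * on_L (a, b) (c, d) x = P * Q * K + x * (of_int (b*d) * (Q\<^sup>2 - P\<^sup>2)
      - P * Q * of_int (a*d + b*c))"
    using QP_pos by (simp add: on_L_def edge_eq_def L_norm_sq_def K_def field_simps)
  also have "\<dots> = P * Q * K - x * (P\<^sup>2 * K + 1)" by (simp only: key)
  finally have "on_L (a, b) (c, d) x = 0 \<longleftrightarrow> P * Q * K = x * (P\<^sup>2 * K + 1)"
    using QP_pos by auto
  also have "\<dots> \<longleftrightarrow> x = xc"
  proof -
    have "0 \<le> P\<^sup>2 * K" using \<open>0 \<le> K\<close> by simp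
    then have "P\<^sup>2 * K + 1 \<noteq> 0" by linarith
    then show ?thesis unfolding xc_def K_def[symmetric] by (auto simp: eq_divide_eq)
  qed
  finally show ?thesis .
qed

lemma on_L_interpolation:
  "on_L v w x = ((Q/P - x) * on_L v w xc + (x - xc) * on_L v w (Q/P)) / (Q/P - xc)"
proof -
  define u0 u1 where "u0 = real_of_int (snd v * snd w + fst v * fst w)"
    and "u1 = of_int (snd v * snd w) * (Q\<^sup>2 - P\<^sup>2) / (P * Q) - of_int (fst v * snd w + snd v * fst w)"
  have "on_L v w y = u0 + u1 * y" for y
    by (simp add: on_L_def edge_eq_def L_norm_sq_def u0_def u1_def algebra_simps)
  then show ?thesis using xc_less QP_pos by (simp add: field_simps)
qed

lemma on_L_at_sigma:
  "on_L v w (Q/P) = (of_int (snd v) * (Q/P) - of_int (fst v)) * (of_int (snd w) * (Q/P) - of_int (fst w))"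
proof -
  have "L_norm_sq Q P (Q/P) = (Q/P)\<^sup>2"
    using QP_pos by (simp add: L_norm_sq_def field_simps power2_eq_square)
  then show ?thesis by (simp add: on_L_def edge_eq_def power2_eq_square algebra_simps)
qed

lemma basis_coords:
  obtains \<alpha> \<gamma> where "v = (\<alpha>*a + \<gamma>*c, \<alpha>*b + \<gamma>*d)"
proof -
  obtain v1 v2 where v: "v = (v1, v2)" by fastforce
  define \<alpha> \<gamma> where "\<alpha> = \<epsilon> * (v1*d - c*v2)" and "\<gamma> = \<epsilon> * (a*v2 - v1*b)"
  have "\<alpha>*a + \<gamma>*c = (\<epsilon>*\<epsilon>) * v1" "\<alpha>*b + \<gamma>*d = (\<epsilon>*\<epsilon>) * v2"
    by (simp_all add: \<alpha>_def \<gamma>_def \<epsilon>_def algebra_simps)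
  then show thesis using that[of \<alpha> \<gamma>] by (simp add: v eps_sq)
qed

lemma on_L_coords_xc:
  "on_L (\<alpha>*a + \<gamma>*c, \<alpha>*b + \<gamma>*d) (\<beta>*a + \<delta>*c, \<beta>*b + \<delta>*d) xc =
    of_int (\<alpha>*\<beta>) * on_L (a, b) (a, b) xc + of_int (\<gamma>*\<delta>) * on_L (c, d) (c, d) xc"
  using on_L_parents_iff[of xc] unfolding on_L_def edge_eq_combination by simp

lemma on_L_coords_sigma:
  "on_L (\<alpha>*a + \<gamma>*c, \<alpha>*b + \<gamma>*d) (\<beta>*a + \<delta>*c, \<beta>*b + \<delta>*d) (Q/P) =
    of_int ((\<gamma> - \<alpha>) * (\<delta> - \<beta>)) * (1 / P\<^sup>2)"
proof -
  have h: "of_int b * (Q/P) - of_int a = - of_int \<epsilon> / P" "of_int d * (Q/P) - of_int c = of_int \<epsilon> / P"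
    using QP_pos by (simp_all add: Q_def P_def \<epsilon>_def field_simps)
  have lin: "of_int (\<mu>*b + \<nu>*d) * (Q/P) - of_int (\<mu>*a + \<nu>*c) = of_int \<epsilon> * of_int (\<nu> - \<mu>) / P"
    for \<mu> \<nu> :: int
  proof -
    have "of_int (\<mu>*b + \<nu>*d) * (Q/P) - of_int (\<mu>*a + \<nu>*c)
        = of_int \<mu> * (of_int b * (Q/P) - of_int a) + of_int \<nu> * (of_int d * (Q/P) - of_int c)"
      by (simp add: algebra_simps)
    also have "\<dots> = of_int \<epsilon> * of_int (\<nu> - \<mu>) / P"
      unfolding h by (simp add: algebra_simps diff_divide_distrib)
    finally show ?thesis .
  qed
  have e2: "real_of_int \<epsilon> * of_int \<epsilon> = 1" by (metis eps_sq of_int_1 of_int_mult)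
  have "on_L (\<alpha>*a + \<gamma>*c, \<alpha>*b + \<gamma>*d) (\<beta>*a + \<delta>*c, \<beta>*b + \<delta>*d) (Q/P)
      = (of_int \<epsilon> * of_int \<epsilon>) * of_int ((\<gamma> - \<alpha>) * (\<delta> - \<beta>)) * (1 / P\<^sup>2)"
    unfolding on_L_at_sigma fst_conv snd_conv lin by (simp add: power2_eq_square)
  then show ?thesis unfolding e2 by simp
qed

lemma on_L_root:
  assumes "\<bar>fdet v w\<bar> = 1" "xc \<le> x" "x < Q/P" "on_L v w x = 0"
  shows "x = xc \<and> v \<in> {(a, b), (-a, -b), (c, d), (-c, -d)} \<and> w \<in> {(a, b), (-a, -b), (c, d), (-c, -d)}"
proof -
  obtain \<alpha> \<gamma> where v: "v = (\<alpha>*a + \<gamma>*c, \<alpha>*b + \<gamma>*d)" by (rule basis_coords)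
  obtain \<beta> \<delta> where w: "w = (\<beta>*a + \<delta>*c, \<beta>*b + \<delta>*d)" by (rule basis_coords)
  have "fdet v w = (\<alpha>*\<delta> - \<beta>*\<gamma>) * \<epsilon>"
    by (simp add: v w fdet_def \<epsilon>_def algebra_simps)
  then have det: "\<bar>\<alpha>*\<delta> - \<beta>*\<gamma>\<bar> = 1"
    using assms(1) eps_cases by (auto simp: abs_mult)
  have "xc\<^sup>2 < L_norm_sq Q P xc" using L_norm_sq_gt_sq[OF xc_nonneg xc_less] .
  then have pos: "0 < on_L (a, b) (a, b) xc" "0 < on_L (c, d) (c, d) xc"
    unfolding on_L_def using sums_pos by (auto intro!: edge_eq_self_pos simp: prod_eq_iff)
  define l where "l = (Q/P - x) / (Q/P - xc)"
  have l: "0 < l" "l \<le> 1" using assms(2,3) xc_less by (simp_all add: l_def)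
  have "0 = on_L v w x" using assms(4) by simp
  also have "\<dots> = (Q/P - x) / (Q/P - xc) * on_L v w xc + (x - xc) / (Q/P - xc) * on_L v w (Q/P)"
    by (subst on_L_interpolation) (simp add: add_divide_distrib)
  also have "(x - xc) / (Q/P - xc) = 1 - l"
    using xc_less by (simp add: l_def field_simps)
  finally have "0 = l * on_L v w xc + (1 - l) * on_L v w (Q/P)"
    by (simp add: l_def)
  then have "l * (of_int (\<alpha>*\<beta>) * on_L (a, b) (a, b) xc + of_int (\<gamma>*\<delta>) * on_L (c, d) (c, d) xc)
      + (1 - l) * (of_int ((\<gamma> - \<alpha>) * (\<delta> - \<beta>)) * (1 / P\<^sup>2)) = 0"
    unfolding v w on_L_coords_xc on_L_coords_sigma by simp
  from unimodular_mixture_root[OF det pos _ l this] QP_pos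
  have "l = 1" "\<alpha>*\<beta> = 0" "\<gamma>*\<delta> = 0" by auto
  then have "x = xc" using xc_less by (simp add: l_def field_simps)
  moreover
  from unimodular_products_zero[OF det \<open>\<alpha>*\<beta> = 0\<close> \<open>\<gamma>*\<delta> = 0\<close>]
  have "(\<alpha> = 0 \<and> \<delta> = 0 \<and> (\<beta> = 1 \<or> \<beta> = -1) \<and> (\<gamma> = 1 \<or> \<gamma> = -1)) \<or>
        (\<beta> = 0 \<and> \<gamma> = 0 \<and> (\<alpha> = 1 \<or> \<alpha> = -1) \<and> (\<delta> = 1 \<or> \<delta> = -1))"
    by arith
  then have "v \<in> {(a, b), (-a, -b), (c, d), (-c, -d)} \<and> w \<in> {(a, b), (-a, -b), (c, d), (-c, -d)}"
    by (auto simp: v w)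
  ultimately show ?thesis by blast
qed

lemma dist_sigma_sq:
  assumes "z \<in> Lgeod sigma"
  shows "(cmod (z - of_real (Q/P)))\<^sup>2 = 1 + (Q/P)\<^sup>2 - Re z * (Q/P + P/Q)"
proof -
  have "(cmod (z - of_real (Q/P)))\<^sup>2 = ((Re z)\<^sup>2 + (Im z)\<^sup>2) - 2 * (Q/P) * Re z + (Q/P)\<^sup>2"
    by (simp only: cmod_power2) (simp add: power2_eq_square algebra_simps)
  also have "\<dots> = L_norm_sq Q P (Re z) - 2 * (Q/P) * Re z + (Q/P)\<^sup>2"
    using assms Lgeod_sigma by simp
  also have "\<dots> = 1 + (Q/P)\<^sup>2 - Re z * (Q/P + P/Q)"
    using QP_pos by (simp add: L_norm_sq_def field_simps power2_eq_square)
  finally show ?thesis .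
qed

lemma dist_sigma_le_iff:
  assumes "z \<in> Lgeod sigma" "z' \<in> Lgeod sigma"
  shows "cmod (z - of_real (Q/P)) \<le> cmod (z' - of_real (Q/P)) \<longleftrightarrow> Re z' \<le> Re z"
proof -
  have "0 < Q/P + P/Q" using QP_pos by (simp add: add_pos_pos)
  have "cmod (z - of_real (Q/P)) \<le> cmod (z' - of_real (Q/P)) \<longleftrightarrow>
        (cmod (z - of_real (Q/P)))\<^sup>2 \<le> (cmod (z' - of_real (Q/P)))\<^sup>2"
    by (simp add: power_mono_iff)
  also have "\<dots> \<longleftrightarrow> Re z' * (Q/P + P/Q) \<le> Re z * (Q/P + P/Q)"
    unfolding dist_sigma_sq[OF assms(1)] dist_sigma_sq[OF assms(2)] by linarith
  also have "\<dots> \<longleftrightarrow> Re z' \<le> Re z" using \<open>0 < Q/P + P/Q\<close> by simp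
  finally show ?thesis .
qed

lemma crossing_on_L:
  assumes "crosses sigma v w z"
  shows "\<bar>fdet v w\<bar> = 1 \<and> 0 \<le> Re z \<and> Re z < Q/P \<and> on_L v w (Re z) = 0"
proof -
  have det: "\<bar>fdet v w\<bar> = 1" using assms farey_edge_unimodular by (auto simp: crosses_def)
  have L: "0 < Im z" "0 \<le> Re z" "(Re z)\<^sup>2 + (Im z)\<^sup>2 = L_norm_sq Q P (Re z)"
    using assms Lgeod_sigma by (auto simp: crosses_def)
  have "0 < (Im z)\<^sup>2" using L(1) by simp
  then have "0 < (Q/P - Re z) * (Re z + P/Q)" using L(3) L_norm_sq_minus_sq[of "Re z"] by linarith
  moreover have "0 < Re z + P/Q" using L(2) QP_pos by (simp add: add_nonneg_pos)
  ultimately have "Re z < Q/P" by (simp add: zero_less_mult_iff)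
  moreover have "z \<in> geod_edge v w" using assms by (simp add: crosses_def)
  ultimately show ?thesis using det L geod_edge_iff[OF det] by (simp add: on_L_def)
qed

lemma crossing_Re_le:
  assumes "crosses sigma v w z"
  shows "Re z \<le> xc"
proof (rule ccontr)
  assume "\<not> Re z \<le> xc"
  with on_L_root[of v w "Re z"] crossing_on_L[OF assms] show False by auto
qed

definition "zc = Complex xc (sqrt (L_norm_sq Q P xc - xc\<^sup>2))"

lemma crosses_zc: "crosses sigma (a, b) (c, d) zc" "Re zc = xc"
proof -
  have "0 < L_norm_sq Q P xc - xc\<^sup>2" using L_norm_sq_gt_sq[OF xc_nonneg xc_less] by simp
  then have zc: "0 < Im zc" "Re zc = xc" "(Re zc)\<^sup>2 + (Im zc)\<^sup>2 = L_norm_sq Q P xc"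
    by (simp_all add: zc_def)
  have det: "\<bar>fdet (a, b) (c, d)\<bar> = 1" using unimodular by (simp add: fdet_def mult.commute)
  then have "fdet (a, b) (c, d) = 1 \<or> fdet (a, b) (c, d) = -1" by arith
  then have "farey_edge (a, b) (c, d)" unfolding farey_edge_def by blast
  moreover have "zc \<in> Lgeod sigma" using zc xc_nonneg Lgeod_sigma by simp
  moreover have "zc \<in> geod_edge (a, b) (c, d)"
    using geod_edge_iff[OF det] zc on_L_parents_iff[of xc] by (simp add: on_L_def)
  ultimately show "crosses sigma (a, b) (c, d) zc" by (simp add: crosses_def)
  show "Re zc = xc" by (rule zc(2))
qed

lemma first_edge_sigma: "first_edge sigma (a, b) (c, d)"
  unfolding first_edge_def sval_sigma
proof (intro exI conjI allI impI)
  show "crosses sigma (a, b) (c, d) zc" by (rule crosses_zc)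
  fix v w z assume "crosses sigma v w z"
  then show "cmod (zc - of_real (Q/P)) \<le> cmod (z - of_real (Q/P))"
    using dist_sigma_le_iff crosses_zc crossing_Re_le by (simp add: crosses_def)
qed

lemma first_edge_vertices:
  assumes "first_edge sigma v w"
  shows "v \<in> {(a, b), (-a, -b), (c, d), (-c, -d)} \<and> w \<in> {(a, b), (-a, -b), (c, d), (-c, -d)}"
proof -
  obtain z where z: "crosses sigma v w z"
    and "cmod (z - of_real (Q/P)) \<le> cmod (zc - of_real (Q/P))"
    using assms crosses_zc(1) unfolding first_edge_def sval_sigma by blast
  then have "xc \<le> Re z" using dist_sigma_le_iff crosses_zc by (simp add: crosses_def)
  then show ?thesis using on_L_root crossing_on_L[OF z] by blast
qed

lemma coprime_parents: "coprime a b" "coprime c d"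
proof -
  have "is_unit g" if "g dvd a \<and> g dvd b \<or> g dvd c \<and> g dvd d" for g
  proof -
    from that have "g dvd \<bar>a*d - b*c\<bar>" by auto
    then show ?thesis using unimodular by simp
  qed
  then show "coprime a b" "coprime c d" by (auto intro: coprimeI)
qed

lemma inQ_parents: "inQ sigma0" "inQ sigma1"
  using coprime_parents nonneg by (simp_all add: inQ_def sigma0_def sigma1_def coprime_int_iff[symmetric])

lemma parents_sigma:
  assumes "sigma \<noteq> (1, 1)"
  shows "parents sigma = {sigma0, sigma1}"
proof -
  have "sigma \<noteq> (0, 1)" "sigma \<noteq> (1, 0)" using sigma_pos by auto
  then have "parents sigma = {t. inQ t \<and> (\<exists>v w. first_edge sigma v w \<and> (same_pt t v \<or> same_pt t w))}"
    using assms by (simp add: parents_def)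
  also have "\<dots> = {sigma0, sigma1}"
  proof (intro set_eqI iffI)
    fix t assume "t \<in> {t. inQ t \<and> (\<exists>v w. first_edge sigma v w \<and> (same_pt t v \<or> same_pt t w))}"
    then obtain u where "inQ t" "same_pt t u" "u \<in> {(a, b), (-a, -b), (c, d), (-c, -d)}"
      using first_edge_vertices by blast
    then show "t \<in> {sigma0, sigma1}"
      using same_pt_unique[of t a b u] same_pt_unique[of t c d u] coprime_parents nonneg
      by (auto simp: sigma0_def sigma1_def)
  next
    fix t assume "t \<in> {sigma0, sigma1}"
    moreover have "same_pt sigma0 (a, b)" "same_pt sigma1 (c, d)"
      using nonneg by (simp_all add: same_pt_def sigma0_def sigma1_def mult.commute)
    ultimately show "t \<in> {t. inQ t \<and> (\<exists>v w. first_edge sigma v w \<and> (same_pt t v \<or> same_pt t w))}"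
      using first_edge_sigma inQ_parents by blast
  qed
  finally show ?thesis .
qed

lemma sigma_eq_one_iff: "sigma = (1, 1) \<longleftrightarrow> a + c = 1 \<and> b + d = 1"
  using sums_pos by (auto simp: sigma_def nat_eq_iff)

lemma equal_sizes_imp_sigma_one:
  assumes "a + b = c + d"
  shows "sigma = (1, 1)"
proof -
  have "a*d - b*c = (a + b) * (a - c) + a * (d - (a + b - c))" by (simp add: algebra_simps)
  then have "\<bar>(a + b) * (a - c)\<bar> = 1" using assms unimodular by simp
  then have "\<bar>a + b\<bar> = 1" "\<bar>a - c\<bar> = 1"
    using abs_zmult_eq_1[of "a + b" "a - c"] abs_zmult_eq_1[of "a - c" "a + b"] by (simp_all add: mult.commute)
  then have "a + c = 1 \<and> b + d = 1" using assms nonneg by arith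
  then show ?thesis using sigma_eq_one_iff by simp
qed

lemma smaller_parent_le:
  assumes "a + b < c + d" "sigma \<noteq> (1, 1)"
  shows "a \<le> c \<and> b \<le> d"
proof -
  have det: "a*d - b*c \<le> 1" "-1 \<le> a*d - b*c" using unimodular by arith+
  have "a \<le> c"
  proof (rule ccontr)
    assume "\<not> a \<le> c"
    then have "c + 1 \<le> a" "b + 1 \<le> d" using assms(1) by auto
    then have "(c + 1) * (b + 1) \<le> a * d" using nonneg by (intro mult_mono) auto
    then have "b = 0" "c = 0" using det nonneg by (simp_all add: algebra_simps)
    then have "a = 1" "d = 1" using zero_coord_cases(1) by auto
    then show False using assms(2) sigma_eq_one_iff \<open>b = 0\<close> \<open>c = 0\<close> by simp
  qed
  moreover have "b \<le> d"
  proof (rule ccontr)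
    assume "\<not> b \<le> d"
    then have "d + 1 \<le> b" "a + 1 \<le> c" using assms(1) by auto
    then have "(d + 1) * (a + 1) \<le> b * c" using nonneg by (intro mult_mono) auto
    then have "a = 0" "d = 0" using det nonneg by (simp_all add: algebra_simps)
    then have "b = 1" "c = 1" using zero_coord_cases(2) by auto
    then show False using assms(2) sigma_eq_one_iff \<open>a = 0\<close> \<open>d = 0\<close> by simp
  qed
  ultimately show ?thesis ..
qed

lemma farey_pair_swap: "farey_pair c d a b"
  using nonneg unimodular by unfold_locales (simp_all add: abs_minus_commute mult.commute)

end

lemma farey_pair_with_sums:
  assumes "coprime q p" "1 \<le> q" "1 \<le> p"
  obtains a b c d where "farey_pair a b c d" "a + c = int q" "b + d = int p"
proof (cases "q = 1")
  case True
  have "farey_pair 0 1 1 (int p - 1)" using assms(3) by unfold_locales auto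
  then show thesis using that True by fastforce
next
  case False
  then have q2: "2 \<le> int q" using assms(2) by simp
  obtain u v where uv: "u * int q + v * int p = 1"
    using bezout_int[of "int q" "int p"] assms(1) by (metis coprime_iff_gcd_eq_1 coprime_int_iff)
  define a where "a = v mod int q"
  have a: "0 \<le> a" "a < int q" using q2 by (simp_all add: a_def)
  have "a * int p - 1 = int q * ((- (v div int q)) * int p - u)"
    using uv by (simp add: a_def minus_mult_div_eq_mod[symmetric] algebra_simps)
  then obtain b where b: "a * int p - 1 = int q * b" by blast
  have "0 \<le> b"
  proof (rule ccontr)
    assume "\<not> 0 \<le> b"
    then have "int q * b \<le> int q * (-1)" using q2 by (intro mult_left_mono) auto
    moreover have "0 \<le> a * int p" using a by simp
    ultimately show False using b q2 by linarith
  qed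
  moreover have "b < int p"
  proof (rule ccontr)
    assume "\<not> b < int p"
    then have "int q * int p \<le> int q * b" using q2 by (intro mult_left_mono) auto
    moreover have "a * int p \<le> (int q - 1) * int p" using a by (intro mult_right_mono) auto
    ultimately show False using b by (simp add: algebra_simps)
  qed
  moreover have "a * (int p - b) - b * (int q - a) = 1" using b by (simp add: algebra_simps)
  ultimately have "farey_pair a b (int q - a) (int p - b)" using a by unfold_locales auto
  then show thesis using that by fastforce
qed

locale ordered_farey_pair = farey_pair +
  assumes size_less: "a + b < c + d" and sigma_not_one: "sigma \<noteq> (1, 1)"

lemma mediant_decomposition:
  assumes "inQ s" "s \<notin> {(0, 1), (1, 0), (1, 1)}"
  obtains a b c d where "ordered_farey_pair a b c d" "farey_pair.sigma a b c d = s"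
proof -
  obtain q p where s: "s = (q, p)" by fastforce
  have "coprime q p" using assms(1) by (simp add: inQ_def s)
  moreover have "q \<noteq> 0 \<and> p \<noteq> 0"
  proof (intro conjI notI)
    assume "q = 0"
    then show False using \<open>coprime q p\<close> assms(2) s by simp
  next
    assume "p = 0"
    then show False using \<open>coprime q p\<close> assms(2) s by simp
  qed
  ultimately have "1 \<le> q" "1 \<le> p" by simp_all
  obtain a b c d where f: "farey_pair a b c d" "a + c = int q" "b + d = int p"
    using farey_pair_with_sums[OF \<open>coprime q p\<close> \<open>1 \<le> q\<close> \<open>1 \<le> p\<close>] .
  interpret farey_pair a b c d by (rule f(1))
  have sigma: "sigma = s" using f(2,3) by (simp add: sigma_def s)
  then have not_one: "sigma \<noteq> (1, 1)" using assms(2) by auto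
  then have "a + b \<noteq> c + d" using equal_sizes_imp_sigma_one by blast
  then consider "a + b < c + d" | "c + d < a + b" by linarith
  then show thesis
  proof cases
    case 1
    then have "ordered_farey_pair a b c d" using not_one by unfold_locales
    then show thesis using that sigma by blast
  next
    case 2
    interpret swap: farey_pair c d a b by (rule farey_pair_swap)
    have "swap.sigma = sigma" by (simp add: swap.sigma_def sigma_def add.commute)
    then have "ordered_farey_pair c d a b" using 2 not_one by unfold_locales auto
    then show thesis using that sigma \<open>swap.sigma = sigma\<close> by blast
  qed
qed

lemma parents_smaller:
  assumes "inQ t" "u \<in> parents t"
  shows "qsize u < qsize t"
proof (cases "t \<in> {(0, 1), (1, 0), (1, 1)}")
  case True
  then show ?thesis using assms(2) by (auto simp: parents_def qsize_def)
next
  case False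
  obtain a b c d where f: "ordered_farey_pair a b c d" "farey_pair.sigma a b c d = t"
    using mediant_decomposition[OF assms(1) False] .
  interpret ordered_farey_pair a b c d by (rule f(1))
  have "u \<in> {sigma0, sigma1}" using assms(2) parents_sigma sigma_not_one f(2) by auto
  then show ?thesis using f(2) nonneg sums_pos
    by (auto simp: qsize_def sigma0_def sigma1_def sigma_def nat_add_distrib[symmetric])
qed

context ordered_farey_pair
begin

lemma left_le_right: "a \<le> c" "b \<le> d"
  using smaller_parent_le[OF size_less sigma_not_one] by auto

definition "sigma' = (nat (c - a), nat (d - b))"

lemma farey_pair_diff: "farey_pair a b (c - a) (d - b)"
  using nonneg left_le_right unimodular by unfold_locales (simp_all add: algebra_simps)

lemma parents_sigma1: "parents sigma1 = {sigma0, sigma'}"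
proof (cases "sigma1 = (1, 1)")
  case True
  then have "c = 1" "d = 1" using nonneg by (auto simp: sigma1_def nat_eq_iff)
  then have "(a = 1 \<and> b = 0) \<or> (a = 0 \<and> b = 1)" using size_less sums_pos(1) nonneg by auto
  then have "{sigma0, sigma'} = {(0, 1), (1, 0)}"
    unfolding sigma0_def sigma'_def using \<open>c = 1\<close> \<open>d = 1\<close> by auto
  then show ?thesis using True by (simp add: parents_def)
next
  case False
  interpret diff: farey_pair a b "c - a" "d - b" by (rule farey_pair_diff)
  have "diff.sigma = sigma1" "diff.sigma0 = sigma0" "diff.sigma1 = sigma'"
    by (simp_all add: diff.sigma_def diff.sigma0_def diff.sigma1_def sigma1_def sigma0_def sigma'_def)
  then show ?thesis using diff.parents_sigma False by simp
qed

lemma inQ_sigma': "inQ sigma'"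
proof -
  interpret diff: farey_pair a b "c - a" "d - b" by (rule farey_pair_diff)
  show ?thesis using diff.inQ_parents(2) by (simp add: diff.sigma1_def sigma'_def)
qed

lemma labels_sigma: "labels sigma = (sigma0, sigma1, sigma')"
  unfolding labels_def
proof (rule some_equality)
  have "sigma0 \<noteq> sigma1" "sigma' \<noteq> sigma0"
    using nonneg size_less left_le_right unimodular by (auto simp: sigma0_def sigma1_def sigma'_def nat_eq_iff)
  then show "case (sigma0, sigma1, sigma') of (s0, s1, s') \<Rightarrow> s0 \<noteq> s1 \<and> parents sigma = {s0, s1} \<and>
      inQ s' \<and> s' \<noteq> s0 \<and> parents s1 = {s0, s'}"
    using parents_sigma[OF sigma_not_one] inQ_sigma' parents_sigma1 by simp
next
  fix x
  assume "case x of (s0, s1, s') \<Rightarrow> s0 \<noteq> s1 \<and> parents sigma = {s0, s1} \<and>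
      inQ s' \<and> s' \<noteq> s0 \<and> parents s1 = {s0, s'}"
  moreover obtain s0 s1 s' where x: "x = (s0, s1, s')" by (cases x) auto
  ultimately have h: "s0 \<noteq> s1" "{s0, s1} = {sigma0, sigma1}" "s' \<noteq> s0" "parents s1 = {s0, s'}"
    using parents_sigma[OF sigma_not_one] by auto
  have "s1 \<noteq> sigma0"
  proof
    assume "s1 = sigma0"
    then have "sigma1 \<in> parents sigma0" using h by (auto simp: doubleton_eq_iff)
    then have "qsize sigma1 < qsize sigma0" using parents_smaller inQ_parents by blast
    then show False using size_less nonneg by (simp add: qsize_def sigma0_def sigma1_def)
  qed
  then have "s1 = sigma1" "s0 = sigma0" using h(1,2) by (auto simp: doubleton_eq_iff)
  then have "s' = sigma'" using h(3,4) parents_sigma1 by (auto simp: doubleton_eq_iff)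
  then show "x = (sigma0, sigma1, sigma')" using x \<open>s1 = sigma1\<close> \<open>s0 = sigma0\<close> by simp
qed

lemma qsize_less: "qsize sigma0 < qsize sigma" "qsize sigma1 < qsize sigma" "qsize sigma' < qsize sigma"
  using sums_pos nonneg left_le_right by (auto simp: qsize_def sigma0_def sigma1_def sigma'_def sigma_def)

lemma Ffun_sigma: "Ffun sigma = (\<lambda>u. conv (conv (Ffun sigma0) (Ffun sigma1)) (ind Lam) u - Ffun sigma' u)"
proof -
  have "\<not> (sigma = (0, 1) \<or> sigma = (1, 1) \<or> sigma = (1, 0))" using sigma_pos sigma_not_one by auto
  then show ?thesis
    by (subst Ffun.simps) (simp add: labels_sigma qsize_less Let_def)
qed

end

section \<open>Convolution with the indicator of \<open>\<Lambda>\<close>\<close>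

definition supp :: "(int \<times> int \<Rightarrow> int) \<Rightarrow> (int \<times> int) set" where
  "supp F = {x. F x \<noteq> 0}"

lemma conv_eq_sum:
  assumes "finite S" "supp F \<subseteq> S"
  shows "conv F G u = (\<Sum>x\<in>S. F x * G (u - x))"
  unfolding conv_def by (rule sum.mono_neutral_left) (use assms in \<open>auto simp: supp_def\<close>)

lemma supp_conv: "supp (conv F G) \<subseteq> (\<lambda>(x, y). x + y) ` (supp F \<times> supp G)"
proof
  fix w assume "w \<in> supp (conv F G)"
  then have "(\<Sum>x\<in>supp F. F x * G (w - x)) \<noteq> 0" by (simp add: supp_def conv_def)
  then obtain x where "x \<in> supp F" "F x * G (w - x) \<noteq> 0"
    by (meson sum.not_neutral_contains_not_neutral)
  then have "(x, w - x) \<in> supp F \<times> supp G" by (simp add: supp_def)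
  then show "w \<in> (\<lambda>(x, y). x + y) ` (supp F \<times> supp G)"
    by (rule rev_image_eqI) simp
qed

lemma finite_supp_conv: "finite (supp F) \<Longrightarrow> finite (supp G) \<Longrightarrow> finite (supp (conv F G))"
  using supp_conv by (metis finite_SigmaI finite_imageI finite_subset)

lemma conv_ind_Lam:
  assumes "finite (supp H)"
  shows "conv H (ind Lam) u = (\<Sum>l\<in>Lam. H (u - l))"
proof -
  have "conv H (ind Lam) u = (\<Sum>x\<in>(\<lambda>l. u - l) ` Lam. H x * ind Lam (u - x))"
    unfolding conv_def
  proof (rule sum.same_carrierI[where C = "supp H \<union> (\<lambda>l. u - l) ` Lam"])
    show "finite (supp H \<union> (\<lambda>l. u - l) ` Lam)" using assms by (simp add: Lam_def)
    show "H x * ind Lam (u - x) = 0" if "x \<in> supp H \<union> (\<lambda>l. u - l) ` Lam - (\<lambda>l. u - l) ` Lam" for x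
      using that by (auto simp: ind_def image_iff)
  qed (auto simp: supp_def)
  also have "\<dots> = (\<Sum>l\<in>Lam. H (u - l))"
    by (subst sum.reindex) (auto simp: inj_on_def ind_def)
  finally show ?thesis .
qed

lemma conv_conv_ind_Lam:
  assumes "finite A" "supp F \<subseteq> A" "finite (supp G)"
  shows "conv (conv F G) (ind Lam) u = (\<Sum>l\<in>Lam. \<Sum>x\<in>A. F x * G (u - l - x))"
  using conv_ind_Lam[OF finite_supp_conv[OF finite_subset[OF assms(2,1)] assms(3)]]
    conv_eq_sum[OF assms(1,2)] by simp

lemma conv_conv_ind_Lam_single:
  assumes "finite A" "supp F \<subseteq> A" "finite C" "supp G \<subseteq> C" "l0 \<in> Lam"
    and unique: "\<And>x l. x \<in> A \<Longrightarrow> l \<in> Lam \<Longrightarrow> u - l - x \<in> C \<Longrightarrow> x = x0 \<and> l = l0"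
  shows "conv (conv F G) (ind Lam) u = F x0 * G (u - l0 - x0)"
proof -
  define V where "V = F x0 * G (u - l0 - x0)"
  have "F x * G (u - l - x) = (if x = x0 then if l = l0 then V else 0 else 0)"
    if "x \<in> A" "l \<in> Lam" for x l
    using unique[OF that] assms(4) by (cases "u - l - x \<in> C") (auto simp: supp_def V_def)
  then have "conv (conv F G) (ind Lam) u = (\<Sum>l\<in>Lam. \<Sum>x\<in>A. if x = x0 then if l = l0 then V else 0 else 0)"
    using conv_conv_ind_Lam[OF assms(1,2) finite_subset[OF assms(4,3)]] by simp
  also have "\<dots> = (if x0 \<in> A then V else 0)"
    using assms(1,5) by (simp add: sum.delta) (simp add: Lam_def)
  also have "\<dots> = V" using assms(2) by (auto simp: supp_def V_def)
  finally show ?thesis by (simp add: V_def)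
qed

lemma conv_conv_ind_Lam_zero:
  assumes "finite A" "supp F \<subseteq> A" "finite C" "supp G \<subseteq> C"
    and none: "\<And>x l. x \<in> A \<Longrightarrow> l \<in> Lam \<Longrightarrow> u - l - x \<notin> C"
  shows "conv (conv F G) (ind Lam) u = 0"
proof -
  have "F x * G (u - l - x) = 0" if "x \<in> A" "l \<in> Lam" for x l
    using none[OF that] assms(4) by (auto simp: supp_def)
  then show ?thesis
    using conv_conv_ind_Lam[OF assms(1,2) finite_subset[OF assms(4,3)]] by (simp add: sum.neutral)
qed

section \<open>The lattice polygons \<open>J\<close>\<close>

definition weight :: "int \<Rightarrow> int \<Rightarrow> int \<times> int \<Rightarrow> int" where
  "weight q p u = p * fst u + q * snd u"

lemma weight_diff: "weight q p (u - v) = weight q p u - weight q p v"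
  by (simp add: weight_def algebra_simps)

definition Jint :: "int \<Rightarrow> int \<Rightarrow> (int \<times> int) set" where
  "Jint q p = {u. even (fst u - q) \<and> even (snd u - p) \<and> -q \<le> fst u \<and> -p \<le> snd u
     \<and> fst u + snd u \<le> p + q - 2 \<and> 0 \<le> weight q p u}"

lemma Jset_eq_Jint: "Jset s = Jint (int (fst s)) (int (snd s))"
  unfolding Jset_def Jint_def weight_def Let_def by (auto simp: mod_eq_dvd_iff)

lemma mem_Jint: "(x1, x2) \<in> Jint q p \<longleftrightarrow> even (x1 - q) \<and> even (x2 - p) \<and> -q \<le> x1 \<and> -p \<le> x2
    \<and> x1 + x2 \<le> p + q - 2 \<and> 0 \<le> p * x1 + q * x2"
  by (simp add: Jint_def weight_def)

lemma finite_Jint: "finite (Jint q p)"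
proof (rule finite_subset)
  show "Jint q p \<subseteq> {-q..2*p + q} \<times> {-p..p + 2*q}" by (auto simp: Jint_def)
qed simp

lemma swap_in_Jint: "prod.swap u \<in> Jint p q \<longleftrightarrow> u \<in> Jint q p"
  by (auto simp: Jint_def weight_def algebra_simps)

lemma Jint_weight_parity:
  assumes "u \<in> Jint q p"
  shows "even (weight Q P u - weight Q P (q, p))"
proof -
  have "weight Q P u - weight Q P (q, p) = P * (fst u - q) + Q * (snd u - p)"
    by (simp add: weight_def algebra_simps)
  then show ?thesis using assms by (simp add: Jint_def)
qed

text \<open>Since \<open>q \<cdot> weight Q P u = Q \<cdot> weight q p u + (q P - Q p) \<cdot> fst u\<close>, a weight whose slope differs
  from that of \<open>J\<close> is bounded below on \<open>J\<close> and attains its minimum only at the corner \<open>(-q, p)\<close>.\<close>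

lemma Jint_weight_lower_bound:
  assumes "u \<in> Jint q p" "0 < q" "0 < Q" "q*P - Q*p = k" "0 < k"
  shows "-k \<le> weight Q P u \<and> (weight Q P u = -k \<longrightarrow> u = (-q, p))"
proof -
  have u: "-q \<le> fst u" "0 \<le> weight q p u" using assms(1) by (simp_all add: Jint_def)
  have "q * weight Q P u = Q * weight q p u + (q*P - Q*p) * (fst u + q) - q * (q*P - Q*p)"
    by (simp add: weight_def algebra_simps)
  then have id: "q * weight Q P u = Q * weight q p u + k * (fst u + q) - q * k"
    unfolding assms(4) .
  have "0 \<le> Q * weight q p u" "0 \<le> k * (fst u + q)" using u assms(3,5) by simp_all
  then have "q * (-k) \<le> q * weight Q P u" using id by simp
  then have "-k \<le> weight Q P u" using mult_le_cancel_left_pos[OF assms(2)] by blast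
  moreover have "u = (-q, p)" if "weight Q P u = -k"
  proof -
    have "Q * weight q p u + k * (fst u + q) = 0" using id that by simp
    then have "Q * weight q p u = 0" "k * (fst u + q) = 0"
      using \<open>0 \<le> Q * weight q p u\<close> \<open>0 \<le> k * (fst u + q)\<close> by linarith+
    then have "weight q p u = 0" "fst u = -q" using assms(3,5) by simp_all
    then have "q * (snd u - p) = 0" by (simp add: weight_def algebra_simps)
    then show ?thesis using \<open>fst u = -q\<close> assms(2) by (simp add: prod_eq_iff)
  qed
  ultimately show ?thesis by blast
qed

lemma Jint_weight_lower_bound':
  assumes "u \<in> Jint q p" "0 < p" "0 < P" "p*Q - P*q = k" "0 < k"
  shows "-k \<le> weight Q P u \<and> (weight Q P u = -k \<longrightarrow> u = (q, -p))"
proof -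
  have "prod.swap u \<in> Jint p q" using assms(1) swap_in_Jint by blast
  from Jint_weight_lower_bound[OF this assms(2-5)]
  show ?thesis by (auto simp: weight_def prod_eq_iff algebra_simps)
qed

lemma Jint_add:
  assumes "x \<in> Jint q p" "l \<in> Lam" "y \<in> Jint q' p'" "0 \<le> weight (q + q') (p + p') (x + l + y)"
  shows "x + l + y \<in> Jint (q + q') (p + p')"
proof -
  have "even (fst l) \<and> even (snd l) \<and> 0 \<le> fst l \<and> 0 \<le> snd l \<and> fst l + snd l \<le> 2"
    using assms(2) by (auto simp: Lam_def)
  moreover have "fst (x + l + y) - (q + q') = (fst x - q) + fst l + (fst y - q')"
    "snd (x + l + y) - (p + p') = (snd x - p) + snd l + (snd y - p')" by simp_all
  ultimately show ?thesis using assms(1,3,4) unfolding Jint_def by auto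
qed

lemma Jint_enlarge:
  assumes "u \<in> Jint q p" "q \<le> q'" "p \<le> p'" "even (q' - q)" "even (p' - p)" "0 \<le> weight q' p' u"
  shows "u \<in> Jint q' p'"
proof -
  have "fst u - q' = (fst u - q) - (q' - q)" "snd u - p' = (snd u - p) - (p' - p)" by simp_all
  then show ?thesis using assms unfolding Jint_def by auto
qed

lemma extremal_intro:
  assumes "x \<in> Jset s" "x \<in> {Ppt s 0, Ppt s (int (snd s) - 1), Qpt s 0, Qpt s (int (fst s) - 1)}"
  shows "x \<in> extremal s"
  using assms by (auto simp: extremal_def)

lemma int_le_square: "int n \<le> int n * int n"
  by (metis le_square of_nat_le_iff of_nat_mult)

lemma Ppt_extremal:
  "0 < snd s \<Longrightarrow> Ppt s 0 \<in> extremal s"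
  "0 < fst s + snd s \<Longrightarrow> Ppt s (int (snd s) - 1) \<in> extremal s"
  using int_le_square[of "snd s"]
  by (auto intro!: extremal_intro simp: Jset_eq_Jint Jint_def weight_def Ppt_def algebra_simps)

lemma Qpt_extremal:
  "0 < fst s \<Longrightarrow> Qpt s 0 \<in> extremal s"
  "0 < fst s + snd s \<Longrightarrow> Qpt s (int (fst s) - 1) \<in> extremal s"
  using int_le_square[of "fst s"]
  by (auto intro!: extremal_intro simp: Jset_eq_Jint Jint_def weight_def Qpt_def algebra_simps)

lemma Lam_cases: "l \<in> Lam \<Longrightarrow> l = (0, 0) \<or> l = (0, 2) \<or> l = (2, 0)"
  by (auto simp: Lam_def)

context farey_pair
begin

lemma Jset_sigma: "Jset sigma0 = Jint a b" "Jset sigma1 = Jint c d" "Jset sigma = Jint (a + c) (b + d)"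
  using nonneg by (simp_all add: Jset_eq_Jint sigma0_def sigma1_def sigma_def)

lemma coords_sigma:
  "int (fst sigma0) = a" "int (snd sigma0) = b" "int (fst sigma1) = c" "int (snd sigma1) = d"
  "int (fst sigma) = a + c" "int (snd sigma) = b + d"
  using nonneg by (simp_all add: sigma0_def sigma1_def sigma_def)

lemma corner_points:
  "Ppt sigma0 i = (a + 2*i, -b)" "Qpt sigma0 i = (-a, b + 2*i)"
  "Ppt sigma1 i = (c + 2*i, -d)" "Qpt sigma1 i = (-c, d + 2*i)"
  "Ppt sigma i = (a + c + 2*i, -(b + d))" "Qpt sigma i = (-(a + c), b + d + 2*i)"
  by (simp_all add: Ppt_def Qpt_def coords_sigma)

lemma parents_pos_iff:
  "0 < fst sigma0 \<longleftrightarrow> 0 < a" "0 < snd sigma0 \<longleftrightarrow> 0 < b" "0 < fst sigma0 + snd sigma0"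
  "0 < fst sigma1 \<longleftrightarrow> 0 < c" "0 < snd sigma1 \<longleftrightarrow> 0 < d" "0 < fst sigma1 + snd sigma1"
  using sums_pos by (auto simp: sigma0_def sigma1_def)

lemma farey_pair_transpose: "farey_pair b a d c"
  using nonneg unimodular by unfold_locales (simp_all add: abs_minus_commute mult.commute)

lemma Ppt_first_decomposition:
  assumes bd: "b \<le> d" and x: "x \<in> Jint a b" and l: "l \<in> Lam"
    and y: "(a + c, -(b + d)) - l - x \<in> Jint c d"
  shows "x = (if b = 0 then (-a, b) else (a, -b)) \<and> l = (if b = 0 then (2, 0) else (0, 0))"
proof -
  obtain x1 x2 where xx: "x = (x1, x2)" by fastforce
  obtain l1 l2 where ll: "l = (l1, l2)" by fastforce
  define y1 y2 where "y1 = a + c - l1 - x1" and "y2 = -(b + d) - l2 - x2"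
  have X: "-a \<le> x1" "-b \<le> x2" "x1 + x2 \<le> b + a - 2" "0 \<le> b * x1 + a * x2"
    using x by (simp_all add: xx mem_Jint)
  have Y: "-c \<le> y1" "-d \<le> y2" "y1 + y2 \<le> d + c - 2" "0 \<le> d * y1 + c * y2"
    using y by (simp_all add: xx ll y1_def y2_def mem_Jint)
  have L: "l1 = 0 \<and> l2 = 0 \<or> l1 = 0 \<and> l2 = 2 \<or> l1 = 2 \<and> l2 = 0" using Lam_cases[OF l] ll by auto
  have "0 < d" using sums_pos(4) bd by linarith
  have x2: "x2 = -b" and l2: "l2 = 0" using X(2) Y(2) L by (auto simp: y2_def)
  then have "0 \<le> d * (y1 - c)" using Y(4) by (simp add: y2_def algebra_simps)
  then have y1c: "c \<le> y1" using \<open>0 < d\<close> by (simp add: zero_le_mult_iff)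
  show ?thesis
  proof (cases "b = 0")
    case True
    then have "a = 1" "d = 1" using zero_coord_cases(1) by auto
    then have "x1 = -1" "y1 = c" using X(1,3) Y(3) y1c x2 l2 True by (simp_all add: y2_def)
    then have "l1 = 2" using \<open>a = 1\<close> by (simp add: y1_def)
    then show ?thesis using True xx ll \<open>x1 = -1\<close> x2 l2 \<open>a = 1\<close> by simp
  next
    case False
    then have "0 \<le> b * (x1 - a)" "0 < b" using X(4) x2 nonneg by (simp_all add: algebra_simps)
    then have "a \<le> x1" by (simp add: zero_le_mult_iff)
    then have "x1 = a" "l1 = 0" using y1c L by (auto simp: y1_def)
    then show ?thesis using False xx ll x2 l2 by simp
  qed
qed

lemma Ppt_last_decomposition:
  assumes x: "x \<in> Jint a b" and l: "l \<in> Lam"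
    and y: "(a + c + 2*(b + d) - 2, -(b + d)) - l - x \<in> Jint c d"
  shows "x = (a + 2*b - 2, -b) \<and> l = (2, 0)"
proof -
  obtain x1 x2 where xx: "x = (x1, x2)" by fastforce
  obtain l1 l2 where ll: "l = (l1, l2)" by fastforce
  have X: "-b \<le> x2" "x1 + x2 \<le> b + a - 2" using x by (simp_all add: xx mem_Jint)
  have Y: "-d \<le> -(b + d) - l2 - x2" "(a + c + 2*(b + d) - 2 - l1 - x1) + (-(b + d) - l2 - x2) \<le> d + c - 2"
    using y by (simp_all add: xx ll mem_Jint)
  have "l1 = 0 \<and> l2 = 0 \<or> l1 = 0 \<and> l2 = 2 \<or> l1 = 2 \<and> l2 = 0" using Lam_cases[OF l] ll by auto
  then have "x2 = -b" "l2 = 0" "l1 = 2" "x1 = a + 2*b - 2" using X Y by auto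
  then show ?thesis using xx ll by simp
qed

lemma transpose_decomposition:
  assumes "x \<in> Jint a b" "l \<in> Lam" "k - l - x \<in> Jint c d"
  shows "prod.swap x \<in> Jint b a" "prod.swap l \<in> Lam" "prod.swap k - prod.swap l - prod.swap x \<in> Jint d c"
proof -
  show "prod.swap x \<in> Jint b a" using assms(1) swap_in_Jint by blast
  show "prod.swap l \<in> Lam" using assms(2) by (auto simp: Lam_def)
  have "prod.swap k - prod.swap l - prod.swap x = prod.swap (k - l - x)" by (simp add: prod_eq_iff)
  then show "prod.swap k - prod.swap l - prod.swap x \<in> Jint d c" using assms(3) swap_in_Jint by simp
qed

lemma Qpt_first_decomposition:
  assumes "a \<le> c" "x \<in> Jint a b" "l \<in> Lam" "(-(a + c), b + d) - l - x \<in> Jint c d"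
  shows "x = (if a = 0 then (a, -b) else (-a, b)) \<and> l = (if a = 0 then (0, 2) else (0, 0))"
proof -
  interpret T: farey_pair b a d c by (rule farey_pair_transpose)
  have "prod.swap x \<in> Jint b a" "prod.swap l \<in> Lam" "(b + d, -(a + c)) - prod.swap l - prod.swap x \<in> Jint d c"
    using transpose_decomposition[OF assms(2-4)] by simp_all
  from T.Ppt_first_decomposition[OF assms(1) this]
  show ?thesis by (auto simp: prod_eq_iff split: if_splits)
qed

lemma Qpt_last_decomposition:
  assumes "x \<in> Jint a b" "l \<in> Lam" "(-(a + c), b + d + 2*(a + c) - 2) - l - x \<in> Jint c d"
  shows "x = (-a, b + 2*a - 2) \<and> l = (0, 2)"
proof -
  interpret T: farey_pair b a d c by (rule farey_pair_transpose)
  have "prod.swap x \<in> Jint b a" "prod.swap l \<in> Lam"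
    "(b + d + 2*(a + c) - 2, -(a + c)) - prod.swap l - prod.swap x \<in> Jint d c"
    using transpose_decomposition[OF assms] by simp_all
  from T.Ppt_last_decomposition[OF this]
  show ?thesis by (auto simp: prod_eq_iff)
qed

end

section \<open>The recursion step\<close>

context ordered_farey_pair
begin

lemma Jset_sigma': "Jset sigma' = Jint (c - a) (d - b)"
  using left_le_right by (simp add: Jset_eq_Jint sigma'_def)

lemma coords_sigma': "int (fst sigma') = c - a" "int (snd sigma') = d - b"
  using left_le_right by (simp_all add: sigma'_def)

lemma corner_points_sigma': "Ppt sigma' i = (c - a + 2*i, -(d - b))" "Qpt sigma' i = (-(c - a), d - b + 2*i)"
  by (simp_all add: Ppt_def Qpt_def coords_sigma')

lemma sigma'_pos_iff: "0 < fst sigma' \<longleftrightarrow> a < c" "0 < snd sigma' \<longleftrightarrow> b < d"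
  by (auto simp: sigma'_def)

lemma eps_one_pos:
  assumes "\<epsilon> = 1"
  shows "0 < a" "0 < d" "b < d"
proof -
  have "0 \<le> b * c" using nonneg by simp
  then have "0 < a * d" using assms by (simp add: \<epsilon>_def)
  then show "0 < a" "0 < d" using nonneg by (auto simp: zero_less_mult_iff)
  show "b < d"
  proof (rule ccontr)
    assume "\<not> b < d"
    then have "a * d \<le> c * b" using nonneg left_le_right by (intro mult_mono) auto
    then show False using assms by (simp add: \<epsilon>_def mult.commute)
  qed
qed

lemma eps_minus_one_pos:
  assumes "\<epsilon> = -1"
  shows "0 < b" "0 < c" "a < c"
proof -
  have "0 \<le> a * d" using nonneg by simp
  then have "0 < b * c" using assms by (simp add: \<epsilon>_def)
  then show "0 < b" "0 < c" using nonneg by (auto simp: zero_less_mult_iff)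
  show "a < c"
  proof (rule ccontr)
    assume "\<not> a < c"
    then have "b * c \<le> d * a" using nonneg left_le_right by (intro mult_mono) auto
    then show False using assms by (simp add: \<epsilon>_def mult.commute)
  qed
qed

abbreviation "W \<equiv> weight (a + c) (b + d)"

definition "xmin = (-\<epsilon>*a, \<epsilon>*b)"
definition "ymin = (\<epsilon>*c, -\<epsilon>*d)"

lemma weight_sigma0:
  assumes "x \<in> Jint a b"
  shows "odd (W x) \<and> -1 \<le> W x \<and> (W x = -1 \<longrightarrow> x = xmin)"
proof -
  have "W (a, b) = 2 * (a*b + b*c) + \<epsilon>" by (simp add: weight_def \<epsilon>_def algebra_simps)
  then have "odd (W (a, b))" using eps_cases by auto
  then have "odd (W x)" using Jint_weight_parity[OF assms] by (metis diff_add_cancel even_add)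
  moreover have "-1 \<le> W x \<and> (W x = -1 \<longrightarrow> x = xmin)"
    using eps_cases
  proof
    assume "\<epsilon> = 1"
    then have "a * (b + d) - (a + c) * b = 1" by (simp add: \<epsilon>_def algebra_simps)
    from Jint_weight_lower_bound[OF assms eps_one_pos(1)[OF \<open>\<epsilon> = 1\<close>] sums_pos(3) this]
    show ?thesis using \<open>\<epsilon> = 1\<close> by (simp add: xmin_def)
  next
    assume "\<epsilon> = -1"
    then have "b * (a + c) - (b + d) * a = 1" by (simp add: \<epsilon>_def algebra_simps)
    from Jint_weight_lower_bound'[OF assms eps_minus_one_pos(1)[OF \<open>\<epsilon> = -1\<close>] sums_pos(4) this]
    show ?thesis using \<open>\<epsilon> = -1\<close> by (simp add: xmin_def)
  qed
  ultimately show ?thesis by blast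
qed

lemma weight_sigma1:
  assumes "y \<in> Jint c d"
  shows "odd (W y) \<and> -1 \<le> W y \<and> (W y = -1 \<longrightarrow> y = ymin)"
proof -
  have "W (c, d) = 2 * (c*d + b*c) + \<epsilon>" by (simp add: weight_def \<epsilon>_def algebra_simps)
  then have "odd (W (c, d))" using eps_cases by auto
  then have "odd (W y)" using Jint_weight_parity[OF assms] by (metis diff_add_cancel even_add)
  moreover have "-1 \<le> W y \<and> (W y = -1 \<longrightarrow> y = ymin)"
    using eps_cases
  proof
    assume "\<epsilon> = 1"
    then have "d * (a + c) - (b + d) * c = 1" by (simp add: \<epsilon>_def algebra_simps)
    from Jint_weight_lower_bound'[OF assms eps_one_pos(2)[OF \<open>\<epsilon> = 1\<close>] sums_pos(4) this]
    show ?thesis using \<open>\<epsilon> = 1\<close> by (simp add: ymin_def)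
  next
    assume "\<epsilon> = -1"
    then have "c * (b + d) - (a + c) * d = 1" by (simp add: \<epsilon>_def algebra_simps)
    from Jint_weight_lower_bound[OF assms eps_minus_one_pos(2)[OF \<open>\<epsilon> = -1\<close>] sums_pos(3) this]
    show ?thesis using \<open>\<epsilon> = -1\<close> by (simp add: ymin_def)
  qed
  ultimately show ?thesis by blast
qed

lemma weight_sigma':
  assumes "u \<in> Jint (c - a) (d - b)"
  shows "even (W u) \<and> -2 \<le> W u \<and> (W u = -2 \<longrightarrow> u = xmin + ymin)"
proof -
  have "W (c - a, d - b) = 2 * (c*d - a*b)" by (simp add: weight_def algebra_simps)
  then have "even (W u)" using Jint_weight_parity[OF assms] by (metis diff_add_cancel even_add even_mult_iff even_numeral)
  moreover have "-2 \<le> W u \<and> (W u = -2 \<longrightarrow> u = xmin + ymin)"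
    using eps_cases
  proof
    assume "\<epsilon> = 1"
    then have k: "(d - b) * (a + c) - (b + d) * (c - a) = 2" by (simp add: \<epsilon>_def algebra_simps)
    have "0 < d - b" using eps_one_pos(3)[OF \<open>\<epsilon> = 1\<close>] by simp
    from Jint_weight_lower_bound'[OF assms this sums_pos(4) k]
    show ?thesis using \<open>\<epsilon> = 1\<close> by (simp add: xmin_def ymin_def)
  next
    assume "\<epsilon> = -1"
    then have k: "(c - a) * (b + d) - (a + c) * (d - b) = 2" by (simp add: \<epsilon>_def algebra_simps)
    have "0 < c - a" using eps_minus_one_pos(3)[OF \<open>\<epsilon> = -1\<close>] by simp
    from Jint_weight_lower_bound[OF assms this sums_pos(3) k]
    show ?thesis using \<open>\<epsilon> = -1\<close> by (simp add: xmin_def ymin_def)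
  qed
  ultimately show ?thesis by blast
qed

lemma weight_Lam: "l \<in> Lam \<Longrightarrow> l = 0 \<or> 2 \<le> W l"
  using sums_pos by (auto simp: Lam_def weight_def zero_prod_def)

lemma negative_weight_decomposition:
  assumes x: "x \<in> Jint a b" and l: "l \<in> Lam" and y: "u - l - x \<in> Jint c d" and neg: "W u < 0"
  shows "x = xmin \<and> l = 0 \<and> u = xmin + ymin"
proof -
  have sum: "W u = W x + W l + W (u - l - x)" by (simp add: weight_diff)
  have "0 \<le> W l" "W l < 2 \<longrightarrow> l = 0" using weight_Lam[OF l] by (auto simp: weight_def)
  moreover have "odd n \<Longrightarrow> -1 \<le> n \<Longrightarrow> n = -1 \<or> 1 \<le> n" for n :: int
    by (cases "n = 0") auto
  ultimately have "W x = -1" "W (u - l - x) = -1" "l = 0"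
    using weight_sigma0[OF x] weight_sigma1[OF y] sum neg by fastforce+
  then show ?thesis using weight_sigma0[OF x] weight_sigma1[OF y] by (simp add: algebra_simps)
qed


lemma bottom_row_not_in_Jsigma':
  assumes "snd k = -(b + d)" "c \<le> fst k"
  shows "k \<notin> Jint (c - a) (d - b)"
proof
  assume "k \<in> Jint (c - a) (d - b)"
  then have "b = 0" "fst k + snd k \<le> d - b + (c - a) - 2" using assms(1) nonneg by (auto simp: Jint_def)
  then show False using zero_coord_cases(1) assms by simp
qed

lemma left_column_not_in_Jsigma':
  assumes "fst k = -(a + c)" "d \<le> snd k"
  shows "k \<notin> Jint (c - a) (d - b)"
proof
  assume "k \<in> Jint (c - a) (d - b)"
  then have "a = 0" "fst k + snd k \<le> d - b + (c - a) - 2" using assms(1) nonneg by (auto simp: Jint_def)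
  then show False using zero_coord_cases(2) assms by simp
qed

lemma xmin_extremal: "xmin \<in> extremal sigma0"
  using eps_cases
proof
  assume "\<epsilon> = 1"
  then have "xmin = Qpt sigma0 0" by (simp add: xmin_def corner_points)
  then show ?thesis using Qpt_extremal(1) eps_one_pos(1)[OF \<open>\<epsilon> = 1\<close>] parents_pos_iff by simp
next
  assume "\<epsilon> = -1"
  then have "xmin = Ppt sigma0 0" by (simp add: xmin_def corner_points)
  then show ?thesis using Ppt_extremal(1) eps_minus_one_pos(1)[OF \<open>\<epsilon> = -1\<close>] parents_pos_iff by simp
qed

lemma ymin_extremal: "ymin \<in> extremal sigma1"
  using eps_cases
proof
  assume "\<epsilon> = 1"
  then have "ymin = Ppt sigma1 0" by (simp add: ymin_def corner_points)
  then show ?thesis using Ppt_extremal(1) eps_one_pos(2)[OF \<open>\<epsilon> = 1\<close>] parents_pos_iff by simp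
next
  assume "\<epsilon> = -1"
  then have "ymin = Qpt sigma1 0" by (simp add: ymin_def corner_points)
  then show ?thesis using Qpt_extremal(1) eps_minus_one_pos(2)[OF \<open>\<epsilon> = -1\<close>] parents_pos_iff by simp
qed

lemma xmin_ymin_extremal: "xmin + ymin \<in> extremal sigma'"
  using eps_cases
proof
  assume "\<epsilon> = 1"
  then have "xmin + ymin = Ppt sigma' 0" by (simp add: xmin_def ymin_def corner_points_sigma')
  then show ?thesis using Ppt_extremal(1) eps_one_pos(3)[OF \<open>\<epsilon> = 1\<close>] sigma'_pos_iff by simp
next
  assume "\<epsilon> = -1"
  then have "xmin + ymin = Qpt sigma' 0" by (simp add: xmin_def ymin_def corner_points_sigma')
  then show ?thesis using Qpt_extremal(1) eps_minus_one_pos(3)[OF \<open>\<epsilon> = -1\<close>] sigma'_pos_iff by simp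
qed

end

locale farey_step = ordered_farey_pair +
  fixes F0 F1 F' :: "int \<times> int \<Rightarrow> int"
  assumes supp_F0: "supp F0 \<subseteq> Jset sigma0" and extremal_F0: "\<And>x. x \<in> extremal sigma0 \<Longrightarrow> F0 x = 1"
    and supp_F1: "supp F1 \<subseteq> Jset sigma1" and extremal_F1: "\<And>x. x \<in> extremal sigma1 \<Longrightarrow> F1 x = 1"
    and supp_F': "supp F' \<subseteq> Jset sigma'" and extremal_F': "\<And>x. x \<in> extremal sigma' \<Longrightarrow> F' x = 1"
begin

definition "F u = conv (conv F0 F1) (ind Lam) u - F' u"

lemma supp_Jint: "supp F0 \<subseteq> Jint a b" "supp F1 \<subseteq> Jint c d" "supp F' \<subseteq> Jint (c - a) (d - b)"
  using supp_F0 supp_F1 supp_F' by (simp_all add: Jset_sigma Jset_sigma')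

lemma F_negative_weight:
  assumes "W u < 0"
  shows "F u = 0"
proof (cases "u = xmin + ymin")
  case True
  have "conv (conv F0 F1) (ind Lam) u = F0 xmin * F1 (u - 0 - xmin)"
    using negative_weight_decomposition assms
    by (intro conv_conv_ind_Lam_single[OF finite_Jint supp_Jint(1) finite_Jint supp_Jint(2)]) (auto simp: Lam_def zero_prod_def)
  also have "\<dots> = 1" using True xmin_extremal ymin_extremal extremal_F0 extremal_F1 by simp
  finally show ?thesis using True extremal_F' xmin_ymin_extremal by (simp add: F_def)
next
  case False
  have "conv (conv F0 F1) (ind Lam) u = 0"
    using negative_weight_decomposition assms False
    by (intro conv_conv_ind_Lam_zero[OF finite_Jint supp_Jint(1) finite_Jint supp_Jint(2)]) blast
  moreover have "u \<notin> Jint (c - a) (d - b)" using weight_sigma' assms False by fastforce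
  then have "F' u = 0" using supp_Jint(3) by (auto simp: supp_def)
  ultimately show ?thesis by (simp add: F_def)
qed

lemma supp_F: "supp F \<subseteq> Jset sigma"
proof
  fix u assume "u \<in> supp F"
  then have "F u \<noteq> 0" by (simp add: supp_def)
  then have W: "0 \<le> W u" using F_negative_weight not_le by blast
  show "u \<in> Jset sigma"
  proof (cases "\<exists>x\<in>Jint a b. \<exists>l\<in>Lam. u - l - x \<in> Jint c d")
    case True
    then obtain x l where "x \<in> Jint a b" "l \<in> Lam" "u - l - x \<in> Jint c d" by blast
    from Jint_add[OF this] W show ?thesis by (simp add: Jset_sigma algebra_simps)
  next
    case False
    then have "conv (conv F0 F1) (ind Lam) u = 0"
      by (intro conv_conv_ind_Lam_zero[OF finite_Jint supp_Jint(1) finite_Jint supp_Jint(2)]) blast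
    then have "F' u \<noteq> 0" using \<open>F u \<noteq> 0\<close> by (simp add: F_def)
    then have "u \<in> Jint (c - a) (d - b)" using supp_Jint(3) by (auto simp: supp_def)
    from Jint_enlarge[OF this, of "a + c" "b + d"] W nonneg show ?thesis by (simp add: Jset_sigma)
  qed
qed

lemma F_corner:
  assumes "l0 \<in> Lam" "x0 \<in> extremal sigma0" "k - l0 - x0 \<in> extremal sigma1" "k \<notin> Jint (c - a) (d - b)"
    and unique: "\<And>x l. x \<in> Jint a b \<Longrightarrow> l \<in> Lam \<Longrightarrow> k - l - x \<in> Jint c d \<Longrightarrow> x = x0 \<and> l = l0"
  shows "F k = 1"
proof -
  have "conv (conv F0 F1) (ind Lam) k = F0 x0 * F1 (k - l0 - x0)"
    by (rule conv_conv_ind_Lam_single[OF finite_Jint supp_Jint(1) finite_Jint supp_Jint(2) assms(1) unique])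
  moreover have "F' k = 0" using assms(4) supp_Jint(3) by (auto simp: supp_def)
  ultimately show ?thesis using assms(2,3) extremal_F0 extremal_F1 by (simp add: F_def)
qed

lemma F_Ppt_first: "F (a + c, -(b + d)) = 1"
proof -
  have notD: "(a + c, -(b + d)) \<notin> Jint (c - a) (d - b)" using nonneg by (intro bottom_row_not_in_Jsigma') simp_all
  show ?thesis
  proof (cases "b = 0")
    case True
    \<comment> \<open>Then \<open>\<sigma>\<^sub>0 = 1/0\<close>, whose polygon is the single point \<open>Q\<^sub>0 = (-1, 0)\<close>.\<close>
    then have "a = 1" "d = 1" using zero_coord_cases(1) by auto
    show ?thesis
    proof (rule F_corner[of "(2, 0)" "Qpt sigma0 0"])
      show "Qpt sigma0 0 \<in> extremal sigma0" using Qpt_extremal(1) parents_pos_iff \<open>a = 1\<close> by simp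
      have "(a + c, -(b + d)) - (2, 0) - Qpt sigma0 0 = Ppt sigma1 0"
        unfolding corner_points using True \<open>a = 1\<close> by simp
      then show "(a + c, -(b + d)) - (2, 0) - Qpt sigma0 0 \<in> extremal sigma1"
        using Ppt_extremal(1) parents_pos_iff \<open>d = 1\<close> by simp
      show "x = Qpt sigma0 0 \<and> l = (2, 0)"
        if "x \<in> Jint a b" "l \<in> Lam" "(a + c, -(b + d)) - l - x \<in> Jint c d" for x l
        using Ppt_first_decomposition[OF left_le_right(2) that] True unfolding corner_points by simp
    qed (use notD in \<open>simp_all add: Lam_def\<close>)
  next
    case False
    show ?thesis
    proof (rule F_corner[of "(0, 0)" "Ppt sigma0 0"])
      show "Ppt sigma0 0 \<in> extremal sigma0" using Ppt_extremal(1) parents_pos_iff False nonneg by simp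
      have "(a + c, -(b + d)) - (0, 0) - Ppt sigma0 0 = Ppt sigma1 0" unfolding corner_points by simp
      then show "(a + c, -(b + d)) - (0, 0) - Ppt sigma0 0 \<in> extremal sigma1"
        using Ppt_extremal(1) parents_pos_iff sums_pos(4) left_le_right by simp
      show "x = Ppt sigma0 0 \<and> l = (0, 0)"
        if "x \<in> Jint a b" "l \<in> Lam" "(a + c, -(b + d)) - l - x \<in> Jint c d" for x l
        using Ppt_first_decomposition[OF left_le_right(2) that] False unfolding corner_points by simp
    qed (use notD in \<open>simp_all add: Lam_def\<close>)
  qed
qed

lemma F_Ppt_last: "F (a + c + 2*(b + d) - 2, -(b + d)) = 1"
proof (rule F_corner[of "(2, 0)" "Ppt sigma0 (int (snd sigma0) - 1)"])
  show "Ppt sigma0 (int (snd sigma0) - 1) \<in> extremal sigma0" using Ppt_extremal(2) parents_pos_iff by simp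
  have "(a + c + 2*(b + d) - 2, -(b + d)) - (2, 0) - Ppt sigma0 (int (snd sigma0) - 1)
      = Ppt sigma1 (int (snd sigma1) - 1)"
    unfolding corner_points coords_sigma by (simp add: algebra_simps)
  then show "(a + c + 2*(b + d) - 2, -(b + d)) - (2, 0) - Ppt sigma0 (int (snd sigma0) - 1) \<in> extremal sigma1"
    using Ppt_extremal(2) parents_pos_iff by simp
  show "(a + c + 2*(b + d) - 2, -(b + d)) \<notin> Jint (c - a) (d - b)"
    using nonneg sums_pos by (intro bottom_row_not_in_Jsigma') simp_all
  show "x = Ppt sigma0 (int (snd sigma0) - 1) \<and> l = (2, 0)"
    if "x \<in> Jint a b" "l \<in> Lam" "(a + c + 2*(b + d) - 2, -(b + d)) - l - x \<in> Jint c d" for x l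
    using Ppt_last_decomposition[OF that] unfolding corner_points coords_sigma by (simp add: algebra_simps)
qed (simp add: Lam_def)

lemma F_Qpt_first: "F (-(a + c), b + d) = 1"
proof -
  have notD: "(-(a + c), b + d) \<notin> Jint (c - a) (d - b)" using nonneg by (intro left_column_not_in_Jsigma') simp_all
  show ?thesis
  proof (cases "a = 0")
    case True
    then have "b = 1" "c = 1" using zero_coord_cases(2) by auto
    show ?thesis
    proof (rule F_corner[of "(0, 2)" "Ppt sigma0 0"])
      show "Ppt sigma0 0 \<in> extremal sigma0" using Ppt_extremal(1) parents_pos_iff \<open>b = 1\<close> by simp
      have "(-(a + c), b + d) - (0, 2) - Ppt sigma0 0 = Qpt sigma1 0"
        unfolding corner_points using True \<open>b = 1\<close> by simp
      then show "(-(a + c), b + d) - (0, 2) - Ppt sigma0 0 \<in> extremal sigma1"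
        using Qpt_extremal(1) parents_pos_iff \<open>c = 1\<close> by simp
      show "x = Ppt sigma0 0 \<and> l = (0, 2)"
        if "x \<in> Jint a b" "l \<in> Lam" "(-(a + c), b + d) - l - x \<in> Jint c d" for x l
        using Qpt_first_decomposition[OF left_le_right(1) that] True unfolding corner_points by simp
    qed (use notD in \<open>simp_all add: Lam_def\<close>)
  next
    case False
    show ?thesis
    proof (rule F_corner[of "(0, 0)" "Qpt sigma0 0"])
      show "Qpt sigma0 0 \<in> extremal sigma0" using Qpt_extremal(1) parents_pos_iff False nonneg by simp
      have "(-(a + c), b + d) - (0, 0) - Qpt sigma0 0 = Qpt sigma1 0" unfolding corner_points by simp
      then show "(-(a + c), b + d) - (0, 0) - Qpt sigma0 0 \<in> extremal sigma1"
        using Qpt_extremal(1) parents_pos_iff sums_pos(3) left_le_right by simp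
      show "x = Qpt sigma0 0 \<and> l = (0, 0)"
        if "x \<in> Jint a b" "l \<in> Lam" "(-(a + c), b + d) - l - x \<in> Jint c d" for x l
        using Qpt_first_decomposition[OF left_le_right(1) that] False unfolding corner_points by simp
    qed (use notD in \<open>simp_all add: Lam_def\<close>)
  qed
qed

lemma F_Qpt_last: "F (-(a + c), b + d + 2*(a + c) - 2) = 1"
proof (rule F_corner[of "(0, 2)" "Qpt sigma0 (int (fst sigma0) - 1)"])
  show "Qpt sigma0 (int (fst sigma0) - 1) \<in> extremal sigma0" using Qpt_extremal(2) parents_pos_iff by simp
  have "(-(a + c), b + d + 2*(a + c) - 2) - (0, 2) - Qpt sigma0 (int (fst sigma0) - 1)
      = Qpt sigma1 (int (fst sigma1) - 1)"
    unfolding corner_points coords_sigma by (simp add: algebra_simps)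
  then show "(-(a + c), b + d + 2*(a + c) - 2) - (0, 2) - Qpt sigma0 (int (fst sigma0) - 1) \<in> extremal sigma1"
    using Qpt_extremal(2) parents_pos_iff by simp
  show "(-(a + c), b + d + 2*(a + c) - 2) \<notin> Jint (c - a) (d - b)"
    using nonneg sums_pos by (intro left_column_not_in_Jsigma') simp_all
  show "x = Qpt sigma0 (int (fst sigma0) - 1) \<and> l = (0, 2)"
    if "x \<in> Jint a b" "l \<in> Lam" "(-(a + c), b + d + 2*(a + c) - 2) - l - x \<in> Jint c d" for x l
    using Qpt_last_decomposition[OF that] unfolding corner_points coords_sigma by (simp add: algebra_simps)
qed (simp add: Lam_def)

lemma F_extremal:
  assumes "k \<in> extremal sigma"
  shows "F k = 1"
proof -
  have "sigma \<noteq> (0, 1)" "sigma \<noteq> (1, 0)" using sigma_pos by auto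
  then show ?thesis
    using assms F_Ppt_first F_Ppt_last F_Qpt_first F_Qpt_last
    by (auto simp: extremal_def corner_points coords_sigma algebra_simps)
qed

end

lemma Ffun_base:
  assumes "s \<in> {(0, 1), (1, 0), (1, 1)}"
  shows "supp (Ffun s) \<subseteq> Jset s \<and> (\<forall>x\<in>extremal s. Ffun s x = 1)"
proof -
  have F: "Ffun s = ind (Jset s)" using assms by (subst Ffun.simps) auto
  have "extremal s \<subseteq> Jset s" using assms by (auto simp: extremal_def Ppt_def Qpt_def Jset_def)
  then show ?thesis by (auto simp: F supp_def ind_def)
qed

theorem lemma8:
  fixes s :: "nat \<times> nat"
  assumes "inQ s"
  shows "{c. Ffun s c \<noteq> 0} \<subseteq> Jset s \<and> (\<forall>c\<in>extremal s. Ffun s c = 1)"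
  using assms
proof (induction s rule: measure_induct_rule[of qsize])
  case (less s)
  show ?case
  proof (cases "s \<in> {(0, 1), (1, 0), (1, 1)}")
    case True
    then show ?thesis using Ffun_base by (simp add: supp_def)
  next
    case False
    obtain a b c d where f: "ordered_farey_pair a b c d" "farey_pair.sigma a b c d = s"
      using mediant_decomposition[OF less.prems False] .
    interpret ordered_farey_pair a b c d by (rule f(1))
    have "supp (Ffun t) \<subseteq> Jset t \<and> (\<forall>x\<in>extremal t. Ffun t x = 1)" if "t \<in> {sigma0, sigma1, sigma'}" for t
      using that less.IH[of t] qsize_less inQ_parents inQ_sigma' f(2) by (auto simp: supp_def)
    then interpret farey_step a b c d "Ffun sigma0" "Ffun sigma1" "Ffun sigma'"
      by unfold_locales auto
    have "Ffun s = F" using Ffun_sigma f(2) by (simp add: F_def fun_eq_iff)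
    then show ?thesis using supp_F F_extremal f(2) by (auto simp: supp_def)
  qed
qed

end
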